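(* Consider the two-layer evolutionary process described in the context, with death-Birth updating in both layers, and let $\boldsymbol{\xi}=(\xi^{[1]},\xi^{[2]})\in\{0,1\}^N\times\{0,1\}^N$ be any initial state that is not one of the four states in which both layers are monomorphic. Let $\rho^{[1]}(\boldsymbol{\xi})$ be the probability that, starting from $\boldsymbol{\xi}$, layer 1 eventually consists only of cooperators. Then, under weak selection, cooperation is favored, i.e. $$\left.\frac{\mathrm{d}}{\mathrm{d}\delta}\rho^{[1]}(\boldsymbol{\xi})\right|_{\delta=0}>0,$$ if and only if $$c\,\theta_2+b\,(\theta_1-\theta_3)-(r-1)\,\phi_{2,0}>0 .$$
   Context: There are $N\ge 2$ individuals $1,\dots,N$. For each layer $L\in\{1,2\}$ there is a connected undirected weighted graph on $\{1,\dots,N\}$ with symmetric nonnegative weights $w^{[L]}_{ij}$; let $s^{[L]}_i=\sum_j w^{[L]}_{ij}>0$, $p^{[L]}_{ij}=w^{[L]}_{ij}/s^{[L]}_i$, let $P^{[L]}=(p^{[L]}_{ij})$, and let $\pi^{[L]}_i=s^{[L]}_i/\sum_k s^{[L]}_k$. A state is $\mathbf{x}=(x^{[1]},x^{[2]})\in\{0,1\}^N\times\{0,1\}^N$; $x^{[1]}_i=1$ ($0$) means individual $i$ is a cooperator (defector) in layer 1, and $x^{[2]}_i=1$ ($0$) means $i$ is a mutant (resident) in layer 2. With parameters $b,c$ and $r\ge 0$, the payoff of $i$ is $u_i=u^{[1]}_i+u^{[2]}_i$, where $u^{[1]}_i=-c\,x^{[1]}_i+\sum_j b\,p^{[1]}_{ij}x^{[1]}_j$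 (donation game) and $u^{[2]}_i=(r-1)x^{[2]}_i+1$ (constant selection). The fecundity is $F_i=1+\delta u_i$, with selection strength $\delta\ge0$. In each time step, simultaneously and independently in each layer $L$: an individual $i$ is chosen uniformly at random, then $j$ is chosen with probability $w^{[L]}_{ij}F_j/\sum_k w^{[L]}_{ik}F_k$, and $x^{[L]}_i$ is replaced by $x^{[L]}_j$ (death-Birth rule in both layers). Let $\hat\xi^{[L]}=\sum_i\pi^{[L]}_i\xi^{[L]}_i$. Let $(\beta_{ij})$ be the unique solution of: $\beta_{ii}=N(\xi^{[1]}_i-\hat\xi^{[1]})+\sum_k p^{[1]}_{ik}\beta_{kk}$ for all $i$; $\beta_{ij}=\tfrac N2(\xi^{[1]}_i\xi^{[1]}_j-\hat\xi^{[1]})+\tfrac12\sum_k p^{[1]}_{ik}\beta_{kj}+\tfrac12\sum_k p^{[1]}_{jk}\beta_{ik}$ for $i\ne j$; and $\sum_i\pi^{[1]}_i\beta_{ii}=0$. Let $(\gamma_{ij})$ be the unique solution of: for all $i,j$, $\gamma_{ij}=\frac{N^2}{2N-1}(\xi^{[1]}_i\xi^{[2]}_j-\hat\xi^{[1]}\hat\xi^{[2]})+\frac{1}{2N-1}\sum_{k_1,k_2}p^{[1]}_{ik_1}p^{[2]}_{jk_2}\gamma_{k_1k_2}+\frac{N-1}{2N-1}\Big(\sum_{k}p^{[1]}_{ik}\gamma_{kj}+\sum_k p^{[2]}_{jk}\gamma_{ik}\Big)$, together with $\sum_i\pi^{[1]}_i\gamma_{ii}=0$. Define $\theta_n=\sum_{i,j}\pi^{[1]}_i\big((P^{[1]})^n\big)_{ij}\beta_{ij}$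 and $\phi_{n,m}=\sum_{i,j}\pi^{[1]}_i\big((P^{[1]})^n(P^{[2]})^m\big)_{ij}\gamma_{ij}$. *)

theory Defs
  imports Complex_Main
begin

text \<open>Individuals are 0..N-1. A weighted graph on them is a function w :: nat => nat => real
  (only the values on indices below N matter). A state is a pair (S1, S2) of subsets of {..<N}:
  i in S1 iff x1_i = 1 (cooperator), i in S2 iff x2_i = 1 (mutant).\<close>

definition strength :: "nat \<Rightarrow> (nat \<Rightarrow> nat \<Rightarrow> real) \<Rightarrow> nat \<Rightarrow> real" where
  "strength N w i = (\<Sum>k<N. w i k)"

definition pmat :: "nat \<Rightarrow> (nat \<Rightarrow> nat \<Rightarrow> real) \<Rightarrow> nat \<Rightarrow> nat \<Rightarrow> real" where
  "pmat N w i j = w i j / strength N w i"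

definition statdist :: "nat \<Rightarrow> (nat \<Rightarrow> nat \<Rightarrow> real) \<Rightarrow> nat \<Rightarrow> real" where
  "statdist N w i = strength N w i / (\<Sum>k<N. strength N w k)"

definition ind :: "nat set \<Rightarrow> nat \<Rightarrow> real" where
  "ind S i = (if i \<in> S then 1 else 0)"

definition meanstate :: "nat \<Rightarrow> (nat \<Rightarrow> nat \<Rightarrow> real) \<Rightarrow> nat set \<Rightarrow> real" where
  "meanstate N w S = (\<Sum>i<N. statdist N w i * ind S i)"

definition valid_layer :: "nat \<Rightarrow> (nat \<Rightarrow> nat \<Rightarrow> real) \<Rightarrow> bool" where
  "valid_layer N w \<longleftrightarrow>
     (\<forall>i<N. \<forall>j<N. w i j = w j i \<and> 0 \<le> w i j) \<and>
     (\<forall>i<N. strength N w i > 0) \<and>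
     (\<forall>i<N. \<forall>j<N. (\<lambda>a b. a < N \<and> b < N \<and> w a b > 0)\<^sup>*\<^sup>* i j)"

definition states :: "nat \<Rightarrow> (nat set \<times> nat set) set" where
  "states N = Pow {..<N} \<times> Pow {..<N}"

text \<open>Payoff u_i = u1_i + u2_i (donation game in layer 1, constant selection in layer 2).\<close>
definition payoff :: "nat \<Rightarrow> (nat \<Rightarrow> nat \<Rightarrow> real) \<Rightarrow> real \<Rightarrow> real \<Rightarrow> real
    \<Rightarrow> nat set \<times> nat set \<Rightarrow> nat \<Rightarrow> real" where
  "payoff N w1 b c r x i =
     (- c * ind (fst x) i + (\<Sum>j<N. b * pmat N w1 i j * ind (fst x) j))
     + ((r - 1) * ind (snd x) i + 1)"

definition fecundity :: "nat \<Rightarrow> (nat \<Rightarrow> nat \<Rightarrow> real) \<Rightarrow> real \<Rightarrow> real \<Rightarrow> real \<Rightarrow> real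
    \<Rightarrow> nat set \<times> nat set \<Rightarrow> nat \<Rightarrow> real" where
  "fecundity N w1 b c r \<delta> x i = 1 + \<delta> * payoff N w1 b c r x i"

definition replace :: "nat set \<Rightarrow> nat \<Rightarrow> nat \<Rightarrow> nat set" where
  "replace S i j = (if j \<in> S then insert i S else S - {i})"

definition layer_trans :: "nat \<Rightarrow> (nat \<Rightarrow> nat \<Rightarrow> real) \<Rightarrow> (nat \<Rightarrow> real)
    \<Rightarrow> nat set \<Rightarrow> nat set \<Rightarrow> real" where
  "layer_trans N w F X Y =
     (\<Sum>i<N. (1 / real N) * (\<Sum>j<N.
        (if Y = replace X i j then w i j * F j / (\<Sum>k<N. w i k * F k) else 0)))"

definition trans :: "nat \<Rightarrow> (nat \<Rightarrow> nat \<Rightarrow> real) \<Rightarrow> (nat \<Rightarrow> nat \<Rightarrow> real) \<Rightarrow> real \<Rightarrow> real \<Rightarrow> real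
    \<Rightarrow> real \<Rightarrow> nat set \<times> nat set \<Rightarrow> nat set \<times> nat set \<Rightarrow> real" where
  "trans N w1 w2 b c r \<delta> x y =
     layer_trans N w1 (fecundity N w1 b c r \<delta> x) (fst x) (fst y) *
     layer_trans N w2 (fecundity N w1 b c r \<delta> x) (snd x) (snd y)"

fun mc_nstep :: "('s \<Rightarrow> 's \<Rightarrow> real) \<Rightarrow> 's set \<Rightarrow> nat \<Rightarrow> 's \<Rightarrow> 's \<Rightarrow> real" where
  "mc_nstep P S 0 x y = (if x = y then 1 else 0)"
| "mc_nstep P S (Suc n) x y = (\<Sum>z\<in>S. P x z * mc_nstep P S n z y)"

text \<open>The target set
  (layer 1 all cooperators) is closed under the dynamics, so this is the limit of the
  probability of being in it at time n.\<close>
definition rho1 :: "nat \<Rightarrow> (nat \<Rightarrow> nat \<Rightarrow> real) \<Rightarrow> (nat \<Rightarrow> nat \<Rightarrow> real) \<Rightarrow> real \<Rightarrow> real \<Rightarrow> real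
    \<Rightarrow> real \<Rightarrow> nat set \<times> nat set \<Rightarrow> real" where
  "rho1 N w1 w2 b c r \<delta> \<xi> =
     lim (\<lambda>n. \<Sum>y\<in>{y \<in> states N. fst y = {..<N}}.
            mc_nstep (trans N w1 w2 b c r \<delta>) (states N) n \<xi> y)"

fun matpow :: "nat \<Rightarrow> (nat \<Rightarrow> nat \<Rightarrow> real) \<Rightarrow> nat \<Rightarrow> nat \<Rightarrow> nat \<Rightarrow> real" where
  "matpow N p 0 i j = (if i = j then 1 else 0)"
| "matpow N p (Suc n) i j = (\<Sum>k<N. p i k * matpow N p n k j)"

definition is_beta :: "nat \<Rightarrow> (nat \<Rightarrow> nat \<Rightarrow> real) \<Rightarrow> nat set \<Rightarrow> (nat \<Rightarrow> nat \<Rightarrow> real) \<Rightarrow> bool" where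
  "is_beta N w1 X \<beta> \<longleftrightarrow>
     (\<forall>i j. \<not> (i < N \<and> j < N) \<longrightarrow> \<beta> i j = 0) \<and>
     (\<forall>i<N. \<beta> i i = real N * (ind X i - meanstate N w1 X)
                    + (\<Sum>k<N. pmat N w1 i k * \<beta> k k)) \<and>
     (\<forall>i<N. \<forall>j<N. i \<noteq> j \<longrightarrow>
        \<beta> i j = real N / 2 * (ind X i * ind X j - meanstate N w1 X)
                 + 1/2 * (\<Sum>k<N. pmat N w1 i k * \<beta> k j)
                 + 1/2 * (\<Sum>k<N. pmat N w1 j k * \<beta> i k)) \<and>
     (\<Sum>i<N. statdist N w1 i * \<beta> i i) = 0"

definition betaM :: "nat \<Rightarrow> (nat \<Rightarrow> nat \<Rightarrow> real) \<Rightarrow> nat set \<Rightarrow> nat \<Rightarrow> nat \<Rightarrow> real" where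
  "betaM N w1 X = (THE \<beta>. is_beta N w1 X \<beta>)"

definition is_gamma :: "nat \<Rightarrow> (nat \<Rightarrow> nat \<Rightarrow> real) \<Rightarrow> (nat \<Rightarrow> nat \<Rightarrow> real)
    \<Rightarrow> nat set \<Rightarrow> nat set \<Rightarrow> (nat \<Rightarrow> nat \<Rightarrow> real) \<Rightarrow> bool" where
  "is_gamma N w1 w2 X1 X2 \<gamma> \<longleftrightarrow>
     (\<forall>i j. \<not> (i < N \<and> j < N) \<longrightarrow> \<gamma> i j = 0) \<and>
     (\<forall>i<N. \<forall>j<N.
        \<gamma> i j = (real N)^2 / (2 * real N - 1)
                   * (ind X1 i * ind X2 j - meanstate N w1 X1 * meanstate N w2 X2)
                 + 1 / (2 * real N - 1)
                   * (\<Sum>k1<N. \<Sum>k2<N. pmat N w1 i k1 * pmat N w2 j k2 * \<gamma> k1 k2)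
                 + (real N - 1) / (2 * real N - 1)
                   * ((\<Sum>k<N. pmat N w1 i k * \<gamma> k j) + (\<Sum>k<N. pmat N w2 j k * \<gamma> i k))) \<and>
     (\<Sum>i<N. statdist N w1 i * \<gamma> i i) = 0"

definition gammaM :: "nat \<Rightarrow> (nat \<Rightarrow> nat \<Rightarrow> real) \<Rightarrow> (nat \<Rightarrow> nat \<Rightarrow> real)
    \<Rightarrow> nat set \<Rightarrow> nat set \<Rightarrow> nat \<Rightarrow> nat \<Rightarrow> real" where
  "gammaM N w1 w2 X1 X2 = (THE \<gamma>. is_gamma N w1 w2 X1 X2 \<gamma>)"

definition theta :: "nat \<Rightarrow> (nat \<Rightarrow> nat \<Rightarrow> real) \<Rightarrow> nat set \<Rightarrow> nat \<Rightarrow> real" where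
  "theta N w1 X n =
     (\<Sum>i<N. \<Sum>j<N. statdist N w1 i * matpow N (pmat N w1) n i j * betaM N w1 X i j)"

definition phi :: "nat \<Rightarrow> (nat \<Rightarrow> nat \<Rightarrow> real) \<Rightarrow> (nat \<Rightarrow> nat \<Rightarrow> real)
    \<Rightarrow> nat set \<Rightarrow> nat set \<Rightarrow> nat \<Rightarrow> nat \<Rightarrow> real" where
  "phi N w1 w2 X1 X2 n m =
     (\<Sum>i<N. \<Sum>j<N. statdist N w1 i
        * (\<Sum>k<N. matpow N (pmat N w1) n i k * matpow N (pmat N w2) m k j)
        * gammaM N w1 w2 X1 X2 i j)"

end

(*
  Write m(x) for the stationary-weighted frequency of cooperators in layer 1. Under neutral
  dynamics (delta = 0) m is a martingale; under selection its expected one-step increment is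
  delta times a drift D_delta(x) that is bounded uniformly for small delta. Each layer fixates
  geometrically fast, uniformly in small delta, and after fixation of layer 1 the value of m is
  the indicator of full cooperation. Hence rho(delta) = m(xi) + delta * sum_t E_delta[D_delta(X_t)],
  the series converging uniformly, and rho'(0) = sum_t E_0[D_0(X_t)].

  At delta = 0 the drift is a combination of the bilinear forms sum_{k,l} pi_k (P^n)_{kl} x_k y_l
  of the layer states, with n = 0..3. The neutral expectations of the pair products x_k x_l and
  x_k z_l, minus their limits, sum over time to matrices that satisfy the linear systems
  defining beta and gamma (the latter up to the normalising shift). A maximum principle on the
  connected graphs shows that these systems have unique solutions, so rho'(0) equals
  (c theta_2 + b (theta_1 - theta_3) - (r - 1) phi_{2,0}) / N.
*)

theory Submission
  imports Defs "HOL-Analysis.Analysis"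
begin

section \<open>Expectations along a finite Markov chain\<close>

definition mc_expect :: "('s \<Rightarrow> 's \<Rightarrow> real) \<Rightarrow> 's set \<Rightarrow> nat \<Rightarrow> ('s \<Rightarrow> real) \<Rightarrow> 's \<Rightarrow> real" where
  "mc_expect P S t h x = (\<Sum>y\<in>S. mc_nstep P S t x y * h y)"

definition stochastic :: "('s \<Rightarrow> 's \<Rightarrow> real) \<Rightarrow> 's set \<Rightarrow> bool" where
  "stochastic P S \<longleftrightarrow> finite S \<and> (\<forall>x\<in>S. \<forall>y\<in>S. 0 \<le> P x y) \<and> (\<forall>x\<in>S. (\<Sum>y\<in>S. P x y) = 1)"

lemma mc_expect_0: "finite S \<Longrightarrow> x \<in> S \<Longrightarrow> mc_expect P S 0 h x = h x"
  by (simp add: mc_expect_def if_distrib[of "\<lambda>p. p * h _"] cong: if_cong)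

lemma mc_expect_Suc:
  "finite S \<Longrightarrow> mc_expect P S (Suc t) h x = (\<Sum>z\<in>S. P x z * mc_expect P S t h z)"
  unfolding mc_expect_def mc_nstep.simps
  by (simp only: sum_distrib_right sum_distrib_left mult.assoc) (rule sum.swap)

lemma mc_expect_1: "finite S \<Longrightarrow> mc_expect P S 1 h x = (\<Sum>z\<in>S. P x z * h z)"
  using mc_expect_Suc[of S P 0 h x] by (simp add: mc_expect_0)

lemma mc_expect_compose:
  "finite S \<Longrightarrow> x \<in> S \<Longrightarrow> mc_expect P S (s + t) h x = mc_expect P S s (mc_expect P S t h) x"
  by (induction s arbitrary: x) (simp_all add: mc_expect_0 mc_expect_Suc)

lemma mc_expect_Suc_right:
  "finite S \<Longrightarrow> x \<in> S \<Longrightarrow> mc_expect P S (Suc t) h x = mc_expect P S t (mc_expect P S 1 h) x"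
  using mc_expect_compose[of S x P t 1 h] by simp

lemma mc_expect_add: "mc_expect P S t (\<lambda>y. h y + g y) x = mc_expect P S t h x + mc_expect P S t g x"
  unfolding mc_expect_def by (simp add: algebra_simps sum.distrib)

lemma mc_expect_diff: "mc_expect P S t (\<lambda>y. h y - g y) x = mc_expect P S t h x - mc_expect P S t g x"
  unfolding mc_expect_def by (simp add: algebra_simps sum_subtractf)

lemma mc_expect_cmult: "mc_expect P S t (\<lambda>y. a * h y) x = a * mc_expect P S t h x"
  unfolding mc_expect_def by (simp add: algebra_simps sum_distrib_left)

lemma mc_expect_sum:
  "mc_expect P S t (\<lambda>y. \<Sum>k\<in>K. h k y) x = (\<Sum>k\<in>K. mc_expect P S t (h k) x)"
  unfolding mc_expect_def by (simp only: sum_distrib_left) (rule sum.swap)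

lemma mc_expect_cong: "(\<And>y. y \<in> S \<Longrightarrow> h y = g y) \<Longrightarrow> mc_expect P S t h x = mc_expect P S t g x"
  unfolding mc_expect_def by simp

lemma mc_expect_invariant:
  assumes "finite S" "x \<in> S" and "\<And>y. y \<in> S \<Longrightarrow> mc_expect P S 1 h y = h y"
  shows "mc_expect P S t h x = h x"
  using assms(2)
proof (induction t arbitrary: x)
  case (Suc t)
  then show ?case
    using mc_expect_cong[of S "mc_expect P S 1 h" h P t x] assms(1,3)
    by (simp add: mc_expect_Suc_right)
qed (simp add: mc_expect_0 assms(1))

lemma mc_nstep_nonneg: "stochastic P S \<Longrightarrow> x \<in> S \<Longrightarrow> 0 \<le> mc_nstep P S t x y"
  by (induction t arbitrary: x) (auto simp: stochastic_def intro!: sum_nonneg mult_nonneg_nonneg)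

lemma mc_expect_mono:
  "stochastic P S \<Longrightarrow> x \<in> S \<Longrightarrow> (\<And>y. y \<in> S \<Longrightarrow> h y \<le> g y) \<Longrightarrow>
    mc_expect P S t h x \<le> mc_expect P S t g x"
  unfolding mc_expect_def by (intro sum_mono mult_left_mono) (auto intro: mc_nstep_nonneg)

lemma mc_expect_nonneg:
  "stochastic P S \<Longrightarrow> x \<in> S \<Longrightarrow> (\<And>y. y \<in> S \<Longrightarrow> 0 \<le> h y) \<Longrightarrow> 0 \<le> mc_expect P S t h x"
  using mc_expect_mono[of P S x "\<lambda>_. 0" h t] by (simp add: mc_expect_def)

lemma mc_expect_const: "stochastic P S \<Longrightarrow> x \<in> S \<Longrightarrow> mc_expect P S t (\<lambda>_. a) x = a"
proof (induction t arbitrary: x)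
  case (Suc t)
  then have "mc_expect P S (Suc t) (\<lambda>_. a) x = (\<Sum>z\<in>S. P x z * a)"
    by (simp add: mc_expect_Suc stochastic_def)
  also have "\<dots> = a"
    using Suc.prems by (simp add: stochastic_def flip: sum_distrib_right)
  finally show ?case .
qed (simp add: mc_expect_0 stochastic_def)

lemma mc_expect_abs_le:
  assumes "stochastic P S" "x \<in> S"
  shows "\<bar>mc_expect P S t h x\<bar> \<le> mc_expect P S t (\<lambda>y. \<bar>h y\<bar>) x"
proof -
  have "\<bar>mc_expect P S t h x\<bar> \<le> (\<Sum>y\<in>S. \<bar>mc_nstep P S t x y * h y\<bar>)"
    unfolding mc_expect_def by (rule sum_abs)
  also have "\<dots> = mc_expect P S t (\<lambda>y. \<bar>h y\<bar>) x"
    unfolding mc_expect_def using mc_nstep_nonneg[OF assms] by (simp add: abs_mult)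
  finally show ?thesis .
qed

lemma mc_expect_closed_class:
  assumes st: "stochastic P S"
    and closed: "\<And>x y. x \<in> S \<Longrightarrow> y \<in> S \<Longrightarrow> sel x = A \<Longrightarrow> P x y \<noteq> 0 \<Longrightarrow> sel y = A"
    and const: "\<And>y. y \<in> S \<Longrightarrow> sel y = A \<Longrightarrow> h y = v"
    and x: "x \<in> S" "sel x = A"
  shows "mc_expect P S t h x = v"
  using x
proof (induction t arbitrary: x)
  case 0
  then show ?case using st const by (simp add: mc_expect_0 stochastic_def)
next
  case (Suc t)
  have step: "P x z * mc_expect P S t h z = P x z * v" if "z \<in> S" for z
    using closed[OF Suc.prems(1) that Suc.prems(2)] Suc.IH[OF that] by fastforce
  have "mc_expect P S (Suc t) h x = (\<Sum>z\<in>S. P x z * v)"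
    using st unfolding stochastic_def by (simp add: mc_expect_Suc step cong: sum.cong)
  also have "\<dots> = v"
    using st Suc.prems by (simp add: stochastic_def flip: sum_distrib_right)
  finally show ?case .
qed

definition mixed :: "('s \<Rightarrow> nat set) \<Rightarrow> nat \<Rightarrow> 's \<Rightarrow> real" where
  "mixed sel n y = (if sel y = {} \<or> sel y = {..<n} then 0 else 1)"

text \<open>Abstracts one layer of the two-layer chain: \<open>sel y\<close> is the set of mutants of that layer.\<close>

locale fixating_chain =
  fixes P :: "'s \<Rightarrow> 's \<Rightarrow> real" and S :: "'s set" and sel :: "'s \<Rightarrow> nat set"
    and n :: nat and \<epsilon> :: real
  assumes stochastic: "stochastic P S"
    and sel_subset: "\<And>y. y \<in> S \<Longrightarrow> sel y \<subseteq> {..<n}"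
    and monomorphic_closed: "\<And>x y. x \<in> S \<Longrightarrow> y \<in> S \<Longrightarrow> sel x = {} \<or> sel x = {..<n} \<Longrightarrow>
      P x y \<noteq> 0 \<Longrightarrow> sel y = sel x"
    and grow: "\<And>x. x \<in> S \<Longrightarrow> sel x \<noteq> {} \<Longrightarrow> sel x \<noteq> {..<n} \<Longrightarrow>
      \<exists>a<n. a \<notin> sel x \<and> \<epsilon> \<le> mc_expect P S 1 (\<lambda>y. if sel y = insert a (sel x) then 1 else 0) x"
    and eps: "0 \<le> \<epsilon>" "\<epsilon> \<le> 1"
begin

lemma finite_states: "finite S"
  using stochastic by (simp add: stochastic_def)

lemma mc_expect_monomorphic:
  assumes "x \<in> S" "sel x = A" "A = {} \<or> A = {..<n}" "\<And>y. y \<in> S \<Longrightarrow> sel y = A \<Longrightarrow> h y = v"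
  shows "mc_expect P S t h x = v"
proof (rule mc_expect_closed_class[where sel = sel and A = A])
  show "sel y = A" if "x' \<in> S" "y \<in> S" "sel x' = A" "P x' y \<noteq> 0" for x' y
    using monomorphic_closed[OF that(1,2) _ that(4)] that(3) assms(3) by simp
qed (use stochastic assms in auto)

lemma fixation_prob_ge:
  "x \<in> S \<Longrightarrow> sel x \<noteq> {} \<Longrightarrow> card ({..<n} - sel x) \<le> k \<Longrightarrow>
    \<epsilon> ^ k \<le> mc_expect P S k (\<lambda>y. if sel y = {..<n} then 1 else 0) x"
proof (induction k arbitrary: x)
  case 0
  then have "sel x = {..<n}" using sel_subset[of x] by (auto simp: card_eq_0_iff)
  then show ?case using 0 finite_states by (simp add: mc_expect_0)
next
  case (Suc k)
  let ?full = "\<lambda>y. if sel y = {..<n} then 1 else (0::real)"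
  show ?case
  proof (cases "sel x = {..<n}")
    case True
    then have "mc_expect P S (Suc k) ?full x = 1"
      using Suc.prems by (intro mc_expect_monomorphic) auto
    then show ?thesis using power_le_one[OF eps, of "Suc k"] by simp
  next
    case False
    obtain a where a: "a < n" "a \<notin> sel x"
      and ge: "\<epsilon> \<le> mc_expect P S 1 (\<lambda>y. if sel y = insert a (sel x) then 1 else 0) x"
      using grow[OF Suc.prems(1,2) False] by blast
    let ?X = "insert a (sel x)"
    have "{..<n} - ?X = ({..<n} - sel x) - {a}" "a \<in> {..<n} - sel x"
      using a by auto
    then have card: "card ({..<n} - ?X) \<le> k"
      using Suc.prems(3) by (simp add: card_Diff_singleton)
    let ?hit = "\<lambda>y. if sel y = ?X then 1 else (0::real)"
    have "\<epsilon> ^ k * ?hit z \<le> mc_expect P S k ?full z" if "z \<in> S" for z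
      using Suc.IH[OF that] card mc_expect_nonneg[OF stochastic that, of ?full k] by auto
    then have "mc_expect P S 1 (\<lambda>y. \<epsilon> ^ k * ?hit y) x \<le> mc_expect P S 1 (mc_expect P S k ?full) x"
      by (intro mc_expect_mono[OF stochastic Suc.prems(1)])
    also have "\<dots> = mc_expect P S (Suc k) ?full x"
      using mc_expect_compose[OF finite_states Suc.prems(1), of P 1 k] by simp
    finally have "\<epsilon> ^ k * mc_expect P S 1 ?hit x \<le> mc_expect P S (Suc k) ?full x"
      by (simp only: mc_expect_cmult)
    moreover have "\<epsilon> ^ k * \<epsilon> \<le> \<epsilon> ^ k * mc_expect P S 1 ?hit x"
      using ge eps by (intro mult_left_mono) auto
    ultimately show ?thesis by (simp add: mult.commute)
  qed
qed

lemma mc_expect_mixed_0: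
  "z \<in> S \<Longrightarrow> sel z = {} \<or> sel z = {..<n} \<Longrightarrow> mc_expect P S t (mixed sel n) z = 0"
  by (intro mc_expect_monomorphic) (auto simp: mixed_def)

lemma mc_expect_mixed_1_le: "z \<in> S \<Longrightarrow> mc_expect P S 1 (mixed sel n) z \<le> mixed sel n z"
  using mc_expect_mixed_0[of z 1] mc_expect_const[OF stochastic, of z 1 1]
    mc_expect_mono[OF stochastic, of z "mixed sel n" "\<lambda>_. 1" 1]
  by (auto simp: mixed_def)

lemma mc_expect_mixed_antimono:
  assumes "x \<in> S"
  shows "mc_expect P S (t + d) (mixed sel n) x \<le> mc_expect P S t (mixed sel n) x"
proof (induction d)
  case (Suc d)
  have "mc_expect P S (Suc (t + d)) (mixed sel n) x
      = mc_expect P S (t + d) (mc_expect P S 1 (mixed sel n)) x"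
    by (rule mc_expect_Suc_right[OF finite_states assms])
  also have "\<dots> \<le> mc_expect P S (t + d) (mixed sel n) x"
    by (rule mc_expect_mono[OF stochastic assms mc_expect_mixed_1_le])
  finally show ?case using Suc by simp
qed simp

lemma mc_expect_mixed_n_le:
  assumes z: "z \<in> S"
  shows "mc_expect P S n (mixed sel n) z \<le> (1 - \<epsilon> ^ n) * mixed sel n z"
proof (cases "sel z = {} \<or> sel z = {..<n}")
  case True
  then show ?thesis using mc_expect_mixed_0[OF z] by (simp add: mixed_def)
next
  case False
  let ?full = "\<lambda>y. if sel y = {..<n} then 1 else (0::real)"
  have "card ({..<n} - sel z) \<le> n"
    by (metis Diff_subset card_lessThan card_mono finite_lessThan)
  then have fixation: "\<epsilon> ^ n \<le> mc_expect P S n ?full z"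
    using False by (intro fixation_prob_ge[OF z]) auto
  have "mc_expect P S n (mixed sel n) z \<le> mc_expect P S n (\<lambda>y. 1 - ?full y) z"
    by (rule mc_expect_mono[OF stochastic z]) (auto simp: mixed_def)
  also have "\<dots> = 1 - mc_expect P S n ?full z"
    using mc_expect_diff[of P S n "\<lambda>_. 1"] mc_expect_const[OF stochastic z] by simp
  finally show ?thesis using fixation False by (simp add: mixed_def)
qed

lemma mc_expect_mixed_le:
  assumes x: "x \<in> S"
  shows "mc_expect P S t (mixed sel n) x \<le> (1 - \<epsilon> ^ n) ^ (t div n)"
proof -
  have blocks: "mc_expect P S (k * n) (mixed sel n) x \<le> (1 - \<epsilon> ^ n) ^ k" for k
  proof (induction k)
    case 0
    then show ?case using x finite_states by (simp add: mc_expect_0 mixed_def)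
  next
    case (Suc k)
    have "mc_expect P S (Suc k * n) (mixed sel n) x
        = mc_expect P S (k * n) (mc_expect P S n (mixed sel n)) x"
      using mc_expect_compose[OF finite_states x, of P "k * n" n] by (simp add: add.commute)
    also have "\<dots> \<le> mc_expect P S (k * n) (\<lambda>y. (1 - \<epsilon> ^ n) * mixed sel n y) x"
      by (rule mc_expect_mono[OF stochastic x mc_expect_mixed_n_le])
    also have "\<dots> \<le> (1 - \<epsilon> ^ n) * (1 - \<epsilon> ^ n) ^ k"
      using Suc eps by (simp add: mc_expect_cmult mult_left_mono power_le_one)
    finally show ?case by simp
  qed
  have "mc_expect P S t (mixed sel n) x \<le> mc_expect P S ((t div n) * n) (mixed sel n) x"
    using mc_expect_mixed_antimono[OF x, of "(t div n) * n" "t mod n"] by simp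
  then show ?thesis using blocks[of "t div n"] by linarith
qed

end

lemma summable_power_div:
  fixes q :: real
  assumes "0 < q" "q < 1" "0 < n"
  shows "summable (\<lambda>t. q ^ (t div n))"
proof -
  define l where "l = q powr (1 / real n)"
  have l: "0 < l" "l < 1" using assms powr_less_mono2[of "1 / real n" q 1] by (auto simp: l_def)
  have bound: "q ^ (t div n) \<le> l ^ t / q" for t
  proof -
    have "real t = real (t div n) * real n + real (t mod n)"
      by (metis of_nat_add of_nat_mult div_mult_mod_eq)
    moreover have "real (t mod n) < real n" using assms by simp
    ultimately have div_ge: "real t / real n - 1 \<le> real (t div n)"
      using assms by (simp add: field_simps)
    have "q ^ (t div n) = q powr real (t div n)"
      using assms by (simp add: powr_realpow)
    also have "\<dots> \<le> q powr (real t / real n - 1)"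
      using assms div_ge by (intro powr_mono') auto
    also have "\<dots> = l ^ t / q"
      using assms l by (simp add: l_def powr_diff powr_powr flip: powr_realpow)
    finally show ?thesis .
  qed
  show ?thesis
    by (rule summable_comparison_test[of _ "\<lambda>t. l ^ t / q"])
      (use bound assms l in \<open>auto intro!: summable_divide summable_geometric\<close>)
qed

section \<open>Random walks on a connected weighted graph\<close>

lemma ind_01: "ind X i = 0 \<or> ind X i = 1" "0 \<le> ind X i" "ind X i \<le> 1" "ind X i * ind X i = ind X i"
  by (auto simp: ind_def)

lemma ind_replace: "ind (replace X a b) i = (if i = a then ind X b else ind X i)"
  by (auto simp: ind_def replace_def)

lemma replace_monomorphic: "X = {} \<or> X = {..<N} \<Longrightarrow> a < N \<Longrightarrow> b < N \<Longrightarrow> replace X a b = X"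
  by (auto simp: replace_def)

lemma matpow_1: "j < N \<Longrightarrow> matpow N p 1 i j = p i j"
  by (simp add: if_distrib[of "\<lambda>x. p i _ * x"] cong: if_cong)

lemma matpow_2: "j < N \<Longrightarrow> matpow N p 2 i j = (\<Sum>a<N. p i a * p a j)"
  using matpow.simps(2)[of N p 1 i j] by (simp only: Suc_1 matpow_1)

lemma matpow_Suc_right:
  "i < N \<Longrightarrow> j < N \<Longrightarrow> matpow N p (Suc m) i j = (\<Sum>a<N. matpow N p m i a * p a j)"
proof (induction m arbitrary: i)
  case 0
  then show ?case by (simp add: if_distrib[of "\<lambda>x. x * p _ j"] if_distrib[of "\<lambda>x. p i _ * x"] cong: if_cong)
next
  case (Suc m)
  have "(\<Sum>a<N. matpow N p (Suc m) i a * p a j) = (\<Sum>b<N. p i b * (\<Sum>a<N. matpow N p m b a * p a j))"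
    by (simp add: sum_distrib_left sum_distrib_right mult.assoc) (rule sum.swap)
  then show ?case using Suc by simp
qed

locale graph_layer =
  fixes N :: nat and w :: "nat \<Rightarrow> nat \<Rightarrow> real"
  assumes valid: "valid_layer N w" and N_pos: "0 < N"
begin

lemma weight_sym: "i < N \<Longrightarrow> j < N \<Longrightarrow> w i j = w j i"
  and weight_nonneg: "i < N \<Longrightarrow> j < N \<Longrightarrow> 0 \<le> w i j"
  and strength_pos: "i < N \<Longrightarrow> 0 < strength N w i"
  using valid by (simp_all add: valid_layer_def)

lemma connected_propagate:
  assumes step: "\<And>a b. a < N \<Longrightarrow> b < N \<Longrightarrow> 0 < w a b \<Longrightarrow> Q a \<Longrightarrow> Q b"
    and i: "i < N" "Q i" and j: "j < N"
  shows "Q j"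
proof -
  have "(\<lambda>a b. a < N \<and> b < N \<and> 0 < w a b)\<^sup>*\<^sup>* i j"
    using valid i j by (simp add: valid_layer_def)
  then show ?thesis by induction (use i step in blast)+
qed

lemma exists_edge_into:
  assumes X: "X \<subseteq> {..<N}" "X \<noteq> {}" "X \<noteq> {..<N}"
  shows "\<exists>a<N. \<exists>b<N. a \<notin> X \<and> b \<in> X \<and> 0 < w a b"
proof (rule ccontr)
  assume no_edge: "\<not> ?thesis"
  obtain u v where u: "u \<in> X" and v: "v < N" "v \<notin> X" using X by auto
  have "v \<in> X"
  proof (rule connected_propagate[where Q = "\<lambda>a. a \<in> X"])
    show "b \<in> X" if "a < N" "b < N" "0 < w a b" "a \<in> X" for a b
      using no_edge weight_sym[of a b] that by auto
  qed (use u v X in auto)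
  with v show False by simp
qed

lemma pmat_nonneg: "i < N \<Longrightarrow> j < N \<Longrightarrow> 0 \<le> pmat N w i j"
  unfolding pmat_def by (intro divide_nonneg_pos weight_nonneg strength_pos)

lemma pmat_pos: "i < N \<Longrightarrow> j < N \<Longrightarrow> 0 < w i j \<Longrightarrow> 0 < pmat N w i j"
  using strength_pos[of i] by (simp add: pmat_def)

lemma pmat_row_sum: "i < N \<Longrightarrow> (\<Sum>j<N. pmat N w i j) = 1"
  using strength_pos[of i] by (simp add: pmat_def strength_def flip: sum_divide_distrib)

lemma pmat_sum_add_const: "i < N \<Longrightarrow> (\<Sum>j<N. pmat N w i j * (f j + m)) = (\<Sum>j<N. pmat N w i j * f j) + m"
  using pmat_row_sum[of i] by (simp add: distrib_left sum.distrib flip: sum_distrib_right)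

lemma pmat_sum_diff_const: "i < N \<Longrightarrow> (\<Sum>j<N. pmat N w i j * (f j - m)) = (\<Sum>j<N. pmat N w i j * f j) - m"
  using pmat_row_sum[of i] by (simp add: right_diff_distrib sum_subtractf flip: sum_distrib_right)

lemma pmat_sum_const_diff: "i < N \<Longrightarrow> (\<Sum>j<N. pmat N w i j * (m - f j)) = m - (\<Sum>j<N. pmat N w i j * f j)"
  using pmat_row_sum[of i] by (simp add: right_diff_distrib sum_subtractf flip: sum_distrib_right)

lemma total_strength_pos: "0 < (\<Sum>k<N. strength N w k)"
  using N_pos by (intro sum_pos) (auto simp: strength_pos)

lemma statdist_pos: "i < N \<Longrightarrow> 0 < statdist N w i"
  using total_strength_pos strength_pos by (simp add: statdist_def)

lemma statdist_sum: "(\<Sum>i<N. statdist N w i) = 1"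
  using total_strength_pos by (simp add: statdist_def flip: sum_divide_distrib)

lemma statdist_sum_mult: "(\<Sum>i<N. statdist N w i * m) = m"
  using statdist_sum by (simp flip: sum_distrib_right)

lemma statdist_pmat_reversible:
  "i < N \<Longrightarrow> j < N \<Longrightarrow> statdist N w i * pmat N w i j = statdist N w j * pmat N w j i"
  using strength_pos[of i] strength_pos[of j] weight_sym[of i j] by (simp add: statdist_def pmat_def)

lemma statdist_pmat_stationary: "j < N \<Longrightarrow> (\<Sum>i<N. statdist N w i * pmat N w i j) = statdist N w j"
proof -
  assume j: "j < N"
  have "(\<Sum>i<N. statdist N w i * pmat N w i j) = (\<Sum>i<N. statdist N w j * pmat N w j i)"
    using j by (intro sum.cong) (auto simp: statdist_pmat_reversible)
  also have "\<dots> = statdist N w j" using pmat_row_sum[OF j] by (simp flip: sum_distrib_left)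
  finally show ?thesis .
qed

lemma matpow_row_sum: "i < N \<Longrightarrow> (\<Sum>j<N. matpow N (pmat N w) n i j) = 1"
proof (induction n arbitrary: i)
  case (Suc n)
  have "(\<Sum>j<N. matpow N (pmat N w) (Suc n) i j) = (\<Sum>k<N. pmat N w i k * (\<Sum>j<N. matpow N (pmat N w) n k j))"
    by (simp add: sum_distrib_left) (rule sum.swap)
  then show ?case using Suc pmat_row_sum by simp
qed simp

lemma statdist_matpow_reversible:
  "k < N \<Longrightarrow> l < N \<Longrightarrow>
    statdist N w k * matpow N (pmat N w) n k l = statdist N w l * matpow N (pmat N w) n l k"
proof (induction n arbitrary: k l)
  case (Suc n)
  have "statdist N w k * matpow N (pmat N w) (Suc n) k l
      = (\<Sum>a<N. (statdist N w k * pmat N w k a) * matpow N (pmat N w) n a l)"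
    by (simp add: sum_distrib_left mult.assoc)
  also have "\<dots> = (\<Sum>a<N. pmat N w a k * (statdist N w a * matpow N (pmat N w) n a l))"
    using Suc.prems by (intro sum.cong) (auto simp: statdist_pmat_reversible mult_ac)
  also have "\<dots> = (\<Sum>a<N. statdist N w l * (matpow N (pmat N w) n l a * pmat N w a k))"
    using Suc by (intro sum.cong) (auto simp: mult_ac)
  also have "\<dots> = statdist N w l * matpow N (pmat N w) (Suc n) l k"
    by (simp only: matpow_Suc_right[OF Suc.prems(2,1)] sum_distrib_left)
  finally show ?case .
qed simp

lemma statdist_matpow_sum: "(\<Sum>k<N. \<Sum>l<N. statdist N w k * matpow N (pmat N w) n k l) = 1"
  by (simp add: matpow_row_sum statdist_sum flip: sum_distrib_left)

lemma meanstate_replace: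
  "a < N \<Longrightarrow> meanstate N w (replace X a b) = meanstate N w X + statdist N w a * (ind X b - ind X a)"
proof -
  assume a: "a < N"
  have "ind (replace X a b) i = ind X i + (if i = a then ind X b - ind X a else 0)" for i
    by (auto simp: ind_def replace_def)
  then show ?thesis using a
    by (simp add: meanstate_def algebra_simps sum.distrib
        if_distrib[of "\<lambda>t. statdist N w i * t" for i] cong: if_cong)
qed

lemma meanstate_bounds: "0 \<le> meanstate N w X" "meanstate N w X \<le> 1"
proof -
  show "0 \<le> meanstate N w X" unfolding meanstate_def
    using statdist_pos ind_01 by (intro sum_nonneg mult_nonneg_nonneg) (auto intro: less_imp_le)
  have "meanstate N w X \<le> (\<Sum>i<N. statdist N w i)" unfolding meanstate_def
    using statdist_pos ind_01 by (intro sum_mono) (auto intro: mult_left_le less_imp_le)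
  then show "meanstate N w X \<le> 1" using statdist_sum by simp
qed

lemma meanstate_monomorphic:
  "meanstate N w {} = 0" "meanstate N w {..<N} = 1"
  using statdist_sum by (simp_all add: meanstate_def ind_def)

end

definition neutral_step :: "nat \<Rightarrow> (nat \<Rightarrow> nat \<Rightarrow> real) \<Rightarrow> (nat set \<Rightarrow> real) \<Rightarrow> nat set \<Rightarrow> real" where
  "neutral_step N w g X = (\<Sum>a<N. \<Sum>b<N. (1 / real N) * pmat N w a b * g (replace X a b))"

lemma neutral_step_alt:
  "neutral_step N w g X = (1 / real N) * (\<Sum>a<N. \<Sum>b<N. pmat N w a b * g (replace X a b))"
  by (simp add: neutral_step_def sum_distrib_left mult.assoc)

lemma neutral_step_cmult: "neutral_step N w (\<lambda>Y. v * g Y) X = v * neutral_step N w g X"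
  by (simp add: neutral_step_def sum_distrib_left mult_ac)

lemma neutral_step_sum: "neutral_step N w (\<lambda>Y. \<Sum>i\<in>I. g i Y) X = (\<Sum>i\<in>I. neutral_step N w (g i) X)"
  unfolding neutral_step_def sum_distrib_left
  by (subst sum.swap, subst (2) sum.swap) (rule refl)

context graph_layer
begin

lemma neutral_step_ind:
  assumes i: "i < N"
  shows "neutral_step N w (\<lambda>Y. ind Y i) X
    = (1 - 1 / real N) * ind X i + (1 / real N) * (\<Sum>b<N. pmat N w i b * ind X b)"
proof -
  have row: "(\<Sum>b<N. pmat N w a b * ind (replace X a b) i)
      = ind X i + (if a = i then (\<Sum>b<N. pmat N w i b * ind X b) - ind X i else 0)" if "a < N" for a
    using pmat_row_sum[OF that] by (simp add: ind_replace flip: sum_distrib_right)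
  show ?thesis
    using i N_pos by (simp add: neutral_step_alt row sum.distrib field_simps)
qed

lemma neutral_step_ind_pair:
  assumes i: "i < N" and j: "j < N" and ij: "i \<noteq> j"
  shows "neutral_step N w (\<lambda>Y. ind Y i * ind Y j) X = (1 - 2 / real N) * (ind X i * ind X j)
    + (1 / real N) * ((\<Sum>b<N. pmat N w i b * (ind X b * ind X j))
                      + (\<Sum>b<N. pmat N w j b * (ind X i * ind X b)))"
proof -
  let ?A = "\<Sum>b<N. pmat N w i b * (ind X b * ind X j)"
  let ?B = "\<Sum>b<N. pmat N w j b * (ind X i * ind X b)"
  have row: "(\<Sum>b<N. pmat N w a b * (ind (replace X a b) i * ind (replace X a b) j))
      = ind X i * ind X j + (if a = i then ?A - ind X i * ind X j else 0)
        + (if a = j then ?B - ind X i * ind X j else 0)" if "a < N" for a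
    using pmat_row_sum[OF that] ij by (simp add: ind_replace flip: sum_distrib_right)
  show ?thesis
    using i j N_pos by (simp add: neutral_step_alt row sum.distrib field_simps)
qed

lemma neutral_step_meanstate: "neutral_step N w (meanstate N w) X = meanstate N w X"
proof -
  have "neutral_step N w (meanstate N w) X = (\<Sum>i<N. statdist N w i * neutral_step N w (\<lambda>Y. ind Y i) X)"
    unfolding meanstate_def by (simp add: neutral_step_sum neutral_step_cmult)
  also have "\<dots> = (\<Sum>i<N. (1 - 1 / real N) * (statdist N w i * ind X i)
      + (1 / real N) * (statdist N w i * (\<Sum>b<N. pmat N w i b * ind X b)))"
    by (intro sum.cong refl) (simp add: neutral_step_ind algebra_simps)
  also have "\<dots> = (1 - 1 / real N) * meanstate N w X
      + (1 / real N) * (\<Sum>i<N. statdist N w i * (\<Sum>b<N. pmat N w i b * ind X b))"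
    by (simp add: sum.distrib meanstate_def sum_divide_distrib flip: sum_distrib_left)
  also have "(\<Sum>i<N. statdist N w i * (\<Sum>b<N. pmat N w i b * ind X b))
      = (\<Sum>b<N. (\<Sum>i<N. statdist N w i * pmat N w i b) * ind X b)"
    by (simp add: sum_distrib_left sum_distrib_right mult.assoc) (rule sum.swap)
  also have "\<dots> = meanstate N w X"
    by (simp add: statdist_pmat_stationary meanstate_def)
  finally show ?thesis by (simp add: algebra_simps)
qed


section \<open>Uniqueness of \<open>\<beta>\<close> and \<open>\<gamma>\<close>\<close>

lemma max_principle_step:
  assumes a: "a < N" and b: "b < N" and wab: "0 < w a b"
    and le: "\<And>k. k < N \<Longrightarrow> z k \<le> M"
    and avg: "(\<Sum>k<N. pmat N w a k * (M - z k)) \<le> 0"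
  shows "z b = M"
proof -
  have nonneg: "0 \<le> pmat N w a k * (M - z k)" if "k < N" for k
    using le[OF that] pmat_nonneg[OF a that] by simp
  then have "0 \<le> (\<Sum>k<N. pmat N w a k * (M - z k))" by (auto intro: sum_nonneg)
  then have "(\<Sum>k<N. pmat N w a k * (M - z k)) = 0" using avg by linarith
  then have "pmat N w a b * (M - z b) = 0"
    using nonneg b by (subst (asm) sum_nonneg_eq_0_iff) auto
  then show ?thesis using pmat_pos[OF a b wab] by simp
qed

lemma harmonic_const:
  assumes harmonic: "\<And>i. i < N \<Longrightarrow> d i = (\<Sum>k<N. pmat N w i k * d k)"
  shows "\<exists>M. \<forall>j<N. d j = M"
proof -
  define M where "M = Max (d ` {..<N})"
  have le: "d k \<le> M" if "k < N" for k unfolding M_def using that by (intro Max_ge) auto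
  have "M \<in> d ` {..<N}" unfolding M_def by (rule Max_in) (use N_pos in auto)
  then obtain i where i: "i < N" "d i = M" by auto
  have "d j = M" if j: "j < N" for j
  proof (rule connected_propagate[where Q = "\<lambda>a. d a = M", OF _ i j])
    fix a b assume a: "a < N" and b: "b < N" and wab: "0 < w a b" and da: "d a = M"
    show "d b = M"
      by (rule max_principle_step[OF a b wab le])
         (use pmat_sum_const_diff[OF a, of M d] harmonic[OF a] da in auto)
  qed
  then show ?thesis by blast
qed

text \<open>A positive maximum would propagate along the first index onto the diagonal, where \<open>e\<close>
  vanishes.\<close>

lemma pair_harmonic_nonpos:
  assumes diag: "\<And>k. k < N \<Longrightarrow> e k k = 0"
    and off: "\<And>i j. i < N \<Longrightarrow> j < N \<Longrightarrow> i \<noteq> j \<Longrightarrow>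
      e i j = 1/2 * (\<Sum>k<N. pmat N w i k * e k j) + 1/2 * (\<Sum>k<N. pmat N w j k * e i k)"
    and i: "i < N" and j: "j < N"
  shows "e i j \<le> 0"
proof (rule ccontr)
  assume pos: "\<not> e i j \<le> 0"
  define M where "M = Max ((\<lambda>(a, b). e a b) ` ({..<N} \<times> {..<N}))"
  have le: "e a b \<le> M" if "a < N" "b < N" for a b
    unfolding M_def using that by (intro Max_ge) auto
  have "M \<in> (\<lambda>(a, b). e a b) ` ({..<N} \<times> {..<N})"
    unfolding M_def by (rule Max_in) (use N_pos in auto)
  then obtain i0 j0 where ij0: "i0 < N" "j0 < N" "e i0 j0 = M" by auto
  have M_pos: "0 < M" using le[OF i j] pos by simp
  have "e j0 j0 = M"
  proof (rule connected_propagate[where Q = "\<lambda>a. e a j0 = M", OF _ ij0(1,3) ij0(2)])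
    fix a b assume a: "a < N" and b: "b < N" and wab: "0 < w a b" and ea: "e a j0 = M"
    have "a \<noteq> j0" using ea diag[OF ij0(2)] M_pos by auto
    then have "(\<Sum>k<N. pmat N w a k * (M - e k j0)) = - (\<Sum>k<N. pmat N w j0 k * (M - e a k))"
      using off[OF a ij0(2)] ea by (simp add: pmat_sum_const_diff a ij0(2))
    also have "\<dots> \<le> 0"
      using le a ij0(2) pmat_nonneg[OF ij0(2)] by (auto intro!: sum_nonneg)
    finally show "e b j0 = M"
      by (rule max_principle_step[OF a b wab, rotated]) (use le ij0(2) in auto)
  qed
  then show False using diag[OF ij0(2)] M_pos by simp
qed

lemma is_beta_diff:
  assumes b1: "is_beta N w X \<beta>1" and b2: "is_beta N w X \<beta>2"
  defines "e \<equiv> \<lambda>i j. \<beta>1 i j - \<beta>2 i j"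
  shows "\<And>i. i < N \<Longrightarrow> e i i = (\<Sum>k<N. pmat N w i k * e k k)"
    and "\<And>i j. i < N \<Longrightarrow> j < N \<Longrightarrow> i \<noteq> j \<Longrightarrow>
      e i j = 1/2 * (\<Sum>k<N. pmat N w i k * e k j) + 1/2 * (\<Sum>k<N. pmat N w j k * e i k)"
    and "(\<Sum>i<N. statdist N w i * e i i) = 0"
    and "\<And>i j. \<not> (i < N \<and> j < N) \<Longrightarrow> e i j = 0"
proof -
  show "e i i = (\<Sum>k<N. pmat N w i k * e k k)" if "i < N" for i
  proof -
    have "\<beta>1 i i = real N * (ind X i - meanstate N w X) + (\<Sum>k<N. pmat N w i k * \<beta>1 k k)"
      "\<beta>2 i i = real N * (ind X i - meanstate N w X) + (\<Sum>k<N. pmat N w i k * \<beta>2 k k)"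
      using b1 b2 that unfolding is_beta_def by blast+
    then show ?thesis by (simp add: e_def right_diff_distrib sum_subtractf)
  qed
  show "e i j = 1/2 * (\<Sum>k<N. pmat N w i k * e k j) + 1/2 * (\<Sum>k<N. pmat N w j k * e i k)"
    if "i < N" "j < N" "i \<noteq> j" for i j
  proof -
    have "\<beta>1 i j = real N / 2 * (ind X i * ind X j - meanstate N w X)
        + 1/2 * (\<Sum>k<N. pmat N w i k * \<beta>1 k j) + 1/2 * (\<Sum>k<N. pmat N w j k * \<beta>1 i k)"
      "\<beta>2 i j = real N / 2 * (ind X i * ind X j - meanstate N w X)
        + 1/2 * (\<Sum>k<N. pmat N w i k * \<beta>2 k j) + 1/2 * (\<Sum>k<N. pmat N w j k * \<beta>2 i k)"
      using b1 b2 that unfolding is_beta_def by blast+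
    then show ?thesis by (simp add: e_def right_diff_distrib sum_subtractf)
  qed
  have "(\<Sum>i<N. statdist N w i * \<beta>1 i i) = 0" "(\<Sum>i<N. statdist N w i * \<beta>2 i i) = 0"
    using b1 b2 unfolding is_beta_def by blast+
  then show "(\<Sum>i<N. statdist N w i * e i i) = 0"
    by (simp add: e_def right_diff_distrib sum_subtractf)
  show "e i j = 0" if "\<not> (i < N \<and> j < N)" for i j
  proof -
    have "\<beta>1 i j = 0" "\<beta>2 i j = 0" using b1 b2 that unfolding is_beta_def by blast+
    then show ?thesis by (simp add: e_def)
  qed
qed

lemma beta_unique:
  assumes b1: "is_beta N w X \<beta>1" and b2: "is_beta N w X \<beta>2"
  shows "\<beta>1 = \<beta>2"
proof -
  define e where "e i j = \<beta>1 i j - \<beta>2 i j" for i j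
  note e = is_beta_diff[OF b1 b2, folded e_def]
  obtain M where M: "\<And>j. j < N \<Longrightarrow> e j j = M" using harmonic_const[OF e(1)] by blast
  then have "M = 0" using e(3) statdist_sum_mult[of M] by simp
  then have diag: "e k k = 0" if "k < N" for k using M that by simp
  then have diag': "- e k k = 0" if "k < N" for k using that by simp
  have off': "- e i j = 1/2 * (\<Sum>k<N. pmat N w i k * - e k j) + 1/2 * (\<Sum>k<N. pmat N w j k * - e i k)"
    if "i < N" "j < N" "i \<noteq> j" for i j
    using e(2)[OF that] by (simp add: sum_negf)
  have "e i j = 0" for i j
  proof (cases "i < N \<and> j < N")
    case True
    then have "e i j \<le> 0" "- e i j \<le> 0"
      using pair_harmonic_nonpos[OF diag e(2)] pair_harmonic_nonpos[OF diag' off'] by blast+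
    then show ?thesis by simp
  qed (use e(4) in auto)
  then show ?thesis unfolding e_def by (intro ext) simp
qed

lemma betaM_eq: "is_beta N w X \<beta> \<Longrightarrow> betaM N w X = \<beta>"
  unfolding betaM_def using beta_unique by blast

end

lemma is_gamma_diff:
  assumes g1: "is_gamma N w1 w2 X1 X2 \<gamma>1" and g2: "is_gamma N w1 w2 X1 X2 \<gamma>2"
  defines "e \<equiv> \<lambda>i j. \<gamma>1 i j - \<gamma>2 i j"
  shows "\<And>i j. i < N \<Longrightarrow> j < N \<Longrightarrow> e i j =
      1 / (2 * real N - 1) * (\<Sum>k1<N. \<Sum>k2<N. pmat N w1 i k1 * pmat N w2 j k2 * e k1 k2)
      + (real N - 1) / (2 * real N - 1)
        * ((\<Sum>k<N. pmat N w1 i k * e k j) + (\<Sum>k<N. pmat N w2 j k * e i k))"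
    and "(\<Sum>i<N. statdist N w1 i * e i i) = 0"
    and "\<And>i j. \<not> (i < N \<and> j < N) \<Longrightarrow> e i j = 0"
proof -
  let ?c = "\<lambda>i j. (real N)^2 / (2 * real N - 1)
    * (ind X1 i * ind X2 j - meanstate N w1 X1 * meanstate N w2 X2)"
  show "e i j = 1 / (2 * real N - 1) * (\<Sum>k1<N. \<Sum>k2<N. pmat N w1 i k1 * pmat N w2 j k2 * e k1 k2)
      + (real N - 1) / (2 * real N - 1)
        * ((\<Sum>k<N. pmat N w1 i k * e k j) + (\<Sum>k<N. pmat N w2 j k * e i k))"
    if "i < N" "j < N" for i j
  proof -
    have "\<gamma>1 i j = ?c i j
        + 1 / (2 * real N - 1) * (\<Sum>k1<N. \<Sum>k2<N. pmat N w1 i k1 * pmat N w2 j k2 * \<gamma>1 k1 k2)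
        + (real N - 1) / (2 * real N - 1)
          * ((\<Sum>k<N. pmat N w1 i k * \<gamma>1 k j) + (\<Sum>k<N. pmat N w2 j k * \<gamma>1 i k))"
      "\<gamma>2 i j = ?c i j
        + 1 / (2 * real N - 1) * (\<Sum>k1<N. \<Sum>k2<N. pmat N w1 i k1 * pmat N w2 j k2 * \<gamma>2 k1 k2)
        + (real N - 1) / (2 * real N - 1)
          * ((\<Sum>k<N. pmat N w1 i k * \<gamma>2 k j) + (\<Sum>k<N. pmat N w2 j k * \<gamma>2 i k))"
      using g1 g2 that unfolding is_gamma_def by blast+
    then show ?thesis
      unfolding e_def by (simp only: right_diff_distrib sum_subtractf) (simp add: algebra_simps)
  qed
  have "(\<Sum>i<N. statdist N w1 i * \<gamma>1 i i) = 0" "(\<Sum>i<N. statdist N w1 i * \<gamma>2 i i) = 0"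
    using g1 g2 unfolding is_gamma_def by blast+
  then show "(\<Sum>i<N. statdist N w1 i * e i i) = 0"
    by (simp add: e_def right_diff_distrib sum_subtractf)
  show "e i j = 0" if "\<not> (i < N \<and> j < N)" for i j
  proof -
    have "\<gamma>1 i j = 0" "\<gamma>2 i j = 0" using g1 g2 that unfolding is_gamma_def by blast+
    then show ?thesis by (simp add: e_def)
  qed
qed

text \<open>A maximum spreads along the edges of layer 1 in the first index and along those of
  layer 2 in the second.\<close>

lemma two_layer_harmonic_const:
  assumes L1: "graph_layer N w1" and L2: "graph_layer N w2"
    and D: "0 < D" and E: "0 < E" and DE: "D + 2 * E = 1"
    and harmonic: "\<And>i j. i < N \<Longrightarrow> j < N \<Longrightarrow> e i j =
      D * (\<Sum>k1<N. \<Sum>k2<N. pmat N w1 i k1 * pmat N w2 j k2 * e k1 k2)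
      + E * ((\<Sum>k<N. pmat N w1 i k * e k j) + (\<Sum>k<N. pmat N w2 j k * e i k))"
  shows "\<exists>M. \<forall>i<N. \<forall>j<N. e i j = M"
proof -
  interpret L1: graph_layer N w1 by (fact L1)
  interpret L2: graph_layer N w2 by (fact L2)
  let ?p1 = "pmat N w1" and ?p2 = "pmat N w2"
  define M where "M = Max ((\<lambda>(a, b). e a b) ` ({..<N} \<times> {..<N}))"
  have le: "e a b \<le> M" if "a < N" "b < N" for a b
    unfolding M_def using that by (intro Max_ge) auto
  have "M \<in> (\<lambda>(a, b). e a b) ` ({..<N} \<times> {..<N})"
    unfolding M_def by (rule Max_in) (use L1.N_pos in auto)
  then obtain i0 j0 where ij0: "i0 < N" "j0 < N" "e i0 j0 = M" by auto
  have spread: "(\<Sum>k<N. ?p1 a k * (M - e k j)) \<le> 0 \<and> (\<Sum>k<N. ?p2 j k * (M - e a k)) \<le> 0"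
    if a: "a < N" and j: "j < N" and max: "e a j = M" for a j
  proof -
    let ?A = "\<Sum>k1<N. \<Sum>k2<N. ?p1 a k1 * ?p2 j k2 * (M - e k1 k2)"
    let ?B = "\<Sum>k<N. ?p1 a k * (M - e k j)" and ?C = "\<Sum>k<N. ?p2 j k * (M - e a k)"
    have A: "?A = M - (\<Sum>k1<N. \<Sum>k2<N. ?p1 a k1 * ?p2 j k2 * e k1 k2)"
      using L1.pmat_sum_const_diff[OF a] L2.pmat_sum_const_diff[OF j]
      by (simp add: sum_distrib_left mult.assoc flip: sum_distrib_left)
    have "D * ?A + E * ?B + E * ?C = (D + 2 * E) * M - e a j"
      unfolding A L1.pmat_sum_const_diff[OF a] L2.pmat_sum_const_diff[OF j] harmonic[OF a j]
      by (simp add: algebra_simps)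
    then have zero: "D * ?A + E * ?B + E * ?C = 0" using DE max by simp
    have "0 \<le> D * ?A" "0 \<le> E * ?B" "0 \<le> E * ?C"
      using a j le L1.pmat_nonneg L2.pmat_nonneg D E by (auto intro!: sum_nonneg mult_nonneg_nonneg)
    then have "E * ?B \<le> 0" "E * ?C \<le> 0" using zero by linarith+
    then show ?thesis using E by (simp add: mult_le_0_iff)
  qed
  have col: "e i j0 = M" if i: "i < N" for i
  proof (rule L1.connected_propagate[where Q = "\<lambda>a. e a j0 = M", OF _ ij0(1,3) i])
    show "e b j0 = M" if "a < N" "b < N" "0 < w1 a b" "e a j0 = M" for a b
      by (rule L1.max_principle_step[OF that(1-3)])
         (use spread[OF that(1) ij0(2) that(4)] le ij0(2) in auto)
  qed
  have "e i j = M" if i: "i < N" and j: "j < N" for i j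
  proof (rule L2.connected_propagate[where Q = "\<lambda>b. e i b = M", OF _ ij0(2) col[OF i] j])
    show "e i b = M" if "a < N" "b < N" "0 < w2 a b" "e i a = M" for a b
      by (rule L2.max_principle_step[OF that(1-3)])
         (use spread[OF i that(1) that(4)] le i in auto)
  qed
  then show ?thesis by blast
qed

lemma gamma_unique:
  assumes L1: "graph_layer N w1" and L2: "graph_layer N w2" and N2: "2 \<le> N"
    and g1: "is_gamma N w1 w2 X1 X2 \<gamma>1" and g2: "is_gamma N w1 w2 X1 X2 \<gamma>2"
  shows "\<gamma>1 = \<gamma>2"
proof -
  define e where "e i j = \<gamma>1 i j - \<gamma>2 i j" for i j
  note e = is_gamma_diff[OF g1 g2, folded e_def]
  have "0 < 1 / (2 * real N - 1)" "0 < (real N - 1) / (2 * real N - 1)"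
    "1 / (2 * real N - 1) + 2 * ((real N - 1) / (2 * real N - 1)) = 1"
    using N2 by (auto simp: field_simps)
  from two_layer_harmonic_const[OF L1 L2 this e(1)]
  obtain M where M: "\<And>i j. i < N \<Longrightarrow> j < N \<Longrightarrow> e i j = M" by blast
  then have "M = 0"
    using e(2) graph_layer.statdist_sum_mult[OF L1, of M] by simp
  then have "e i j = 0" for i j
    using M e(3) by (cases "i < N \<and> j < N") auto
  then show ?thesis unfolding e_def by (intro ext) simp
qed

lemma gammaM_eq:
  "graph_layer N w1 \<Longrightarrow> graph_layer N w2 \<Longrightarrow> 2 \<le> N \<Longrightarrow> is_gamma N w1 w2 X1 X2 \<gamma> \<Longrightarrow>
    gammaM N w1 w2 X1 X2 = \<gamma>"
  unfolding gammaM_def using gamma_unique by blast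

section \<open>Stationary bilinear forms\<close>

text \<open>\<open>theta\<close>, and \<open>phi\<close> with \<open>m = 0\<close>, are values of \<open>pi_form\<close>.\<close>

definition pi_inner :: "nat \<Rightarrow> (nat \<Rightarrow> nat \<Rightarrow> real) \<Rightarrow> nat \<Rightarrow> (nat \<Rightarrow> real) \<Rightarrow> (nat \<Rightarrow> real) \<Rightarrow> real" where
  "pi_inner N w n f g = (\<Sum>k<N. \<Sum>l<N. statdist N w k * matpow N (pmat N w) n k l * (f k * g l))"

definition pi_form :: "nat \<Rightarrow> (nat \<Rightarrow> nat \<Rightarrow> real) \<Rightarrow> nat \<Rightarrow> (nat \<Rightarrow> nat \<Rightarrow> real) \<Rightarrow> real" where
  "pi_form N w n M = (\<Sum>k<N. \<Sum>l<N. statdist N w k * matpow N (pmat N w) n k l * M k l)"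

lemma pi_inner_pi_form: "pi_inner N w n f g = pi_form N w n (\<lambda>k l. f k * g l)"
  by (simp add: pi_inner_def pi_form_def)

text \<open>The difference of the next two is the stationary average of the covariance of \<open>v\<close> and
  \<open>x\<close> over the neighbourhood of a site; the drift at \<open>\<delta> = 0\<close> is of this form
  (\<open>drift_neutral_nbr\<close>).\<close>

definition nbr_avg_prod :: "nat \<Rightarrow> (nat \<Rightarrow> nat \<Rightarrow> real) \<Rightarrow> (nat \<Rightarrow> real) \<Rightarrow> (nat \<Rightarrow> real) \<Rightarrow> real" where
  "nbr_avg_prod N w v x = (\<Sum>a<N. statdist N w a * (\<Sum>b<N. pmat N w a b * v b * x b))"

definition nbr_prod_avg :: "nat \<Rightarrow> (nat \<Rightarrow> nat \<Rightarrow> real) \<Rightarrow> (nat \<Rightarrow> real) \<Rightarrow> (nat \<Rightarrow> real) \<Rightarrow> real" where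
  "nbr_prod_avg N w v x =
     (\<Sum>a<N. statdist N w a * ((\<Sum>k<N. pmat N w a k * v k) * (\<Sum>b<N. pmat N w a b * x b)))"

lemma nbr_avg_prod_linear:
  "nbr_avg_prod N w (\<lambda>b. \<alpha> * v b + g b) x = \<alpha> * nbr_avg_prod N w v x + nbr_avg_prod N w g x"
  by (simp add: nbr_avg_prod_def algebra_simps sum.distrib sum_distrib_left)

lemma nbr_prod_avg_linear:
  "nbr_prod_avg N w (\<lambda>b. \<alpha> * v b + g b) x = \<alpha> * nbr_prod_avg N w v x + nbr_prod_avg N w g x"
proof -
  let ?avg = "\<lambda>f a. \<Sum>k<N. pmat N w a k * f k"
  have "?avg (\<lambda>b. \<alpha> * v b + g b) a = \<alpha> * ?avg v a + ?avg g a" for a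
    by (simp add: algebra_simps sum.distrib sum_distrib_left)
  then have "nbr_prod_avg N w (\<lambda>b. \<alpha> * v b + g b) x
      = (\<Sum>a<N. \<alpha> * (statdist N w a * (?avg v a * ?avg x a)) + statdist N w a * (?avg g a * ?avg x a))"
    unfolding nbr_prod_avg_def by (intro sum.cong refl) (simp add: algebra_simps)
  then show ?thesis by (simp add: nbr_prod_avg_def sum.distrib flip: sum_distrib_left)
qed

context graph_layer
begin

lemma pi_form_add_const: "pi_form N w n (\<lambda>k l. M k l + m) = pi_form N w n M + m"
  using statdist_matpow_sum[of n]
  by (simp add: pi_form_def distrib_left sum.distrib flip: sum_distrib_right)

lemma pi_form_0: "pi_form N w 0 M = (\<Sum>k<N. statdist N w k * M k k)"
proof -
  have "pi_form N w 0 M = (\<Sum>k<N. \<Sum>l<N. if l = k then statdist N w k * M k l else 0)"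
    unfolding pi_form_def by (intro sum.cong refl) auto
  then show ?thesis by simp
qed

lemma pi_inner_0: "pi_inner N w 0 f g = (\<Sum>k<N. statdist N w k * (f k * g k))"
  by (simp add: pi_inner_pi_form pi_form_0)

lemma pi_inner_1: "pi_inner N w 1 f g = (\<Sum>k<N. \<Sum>l<N. statdist N w k * pmat N w k l * (f k * g l))"
  unfolding pi_inner_def by (intro sum.cong refl) (simp only: matpow_1 lessThan_iff)

lemma pi_inner_swap: "pi_inner N w n f g = pi_inner N w n g f"
proof -
  have "pi_inner N w n f g = (\<Sum>l<N. \<Sum>k<N. statdist N w k * matpow N (pmat N w) n k l * (f k * g l))"
    unfolding pi_inner_def by (rule sum.swap)
  also have "\<dots> = pi_inner N w n g f"
    unfolding pi_inner_def by (intro sum.cong refl) (simp add: statdist_matpow_reversible mult_ac)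
  finally show ?thesis .
qed

lemma nbr_avg_prod_eq: "nbr_avg_prod N w v x = pi_inner N w 0 x v"
proof -
  have "nbr_avg_prod N w v x = (\<Sum>b<N. (\<Sum>a<N. statdist N w a * pmat N w a b) * (v b * x b))"
    unfolding nbr_avg_prod_def
    by (simp add: sum_distrib_left sum_distrib_right mult_ac) (rule sum.swap)
  then show ?thesis by (simp add: pi_inner_0 statdist_pmat_stationary mult_ac)
qed

lemma nbr_avg_prod_pmat: "nbr_avg_prod N w (\<lambda>b. \<Sum>j<N. pmat N w b j * x j) x = pi_inner N w 1 x x"
  unfolding nbr_avg_prod_eq pi_inner_0 pi_inner_1 by (simp add: sum_distrib_left mult_ac)

lemma nbr_avg_prod_1: "nbr_avg_prod N w (\<lambda>_. 1) x = nbr_prod_avg N w (\<lambda>_. 1) x"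
  by (simp add: nbr_avg_prod_def nbr_prod_avg_def pmat_row_sum)

lemma nbr_prod_avg_eq: "nbr_prod_avg N w v x = pi_inner N w 2 v x"
proof -
  have "nbr_prod_avg N w v x
      = (\<Sum>a<N. \<Sum>k<N. \<Sum>l<N. (statdist N w a * pmat N w a k) * pmat N w a l * (v k * x l))"
    unfolding nbr_prod_avg_def sum_product unfolding sum_distrib_left
    by (intro sum.cong refl) (simp add: mult_ac)
  also have "\<dots> = (\<Sum>k<N. \<Sum>l<N. \<Sum>a<N. (statdist N w a * pmat N w a k) * pmat N w a l * (v k * x l))"
    by (subst sum.swap, subst (2) sum.swap) (rule refl)
  also have "\<dots> = (\<Sum>k<N. \<Sum>l<N. statdist N w k * (\<Sum>a<N. pmat N w k a * pmat N w a l) * (v k * x l))"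
    by (intro sum.cong refl)
       (simp add: statdist_pmat_reversible sum_distrib_left sum_distrib_right mult_ac)
  also have "\<dots> = pi_inner N w 2 v x"
    unfolding pi_inner_def by (intro sum.cong refl) (simp only: matpow_2 lessThan_iff)
  finally show ?thesis .
qed

lemma nbr_prod_avg_pmat: "nbr_prod_avg N w (\<lambda>k. \<Sum>j<N. pmat N w k j * x j) x = pi_inner N w 3 x x"
proof -
  let ?P2 = "matpow N (pmat N w) 2"
  have "nbr_prod_avg N w (\<lambda>k. \<Sum>j<N. pmat N w k j * x j) x
      = (\<Sum>k<N. \<Sum>l<N. \<Sum>j<N. (statdist N w k * pmat N w k j) * ?P2 k l * (x j * x l))"
    unfolding nbr_prod_avg_eq pi_inner_def sum_distrib_left sum_distrib_right
    by (intro sum.cong refl) (simp add: mult_ac)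
  also have "\<dots> = (\<Sum>j<N. \<Sum>l<N. \<Sum>k<N. (statdist N w k * pmat N w k j) * ?P2 k l * (x j * x l))"
    by (subst (2) sum.swap, subst sum.swap, subst (2) sum.swap) (rule refl)
  also have "\<dots> = (\<Sum>j<N. \<Sum>l<N. statdist N w j * (\<Sum>k<N. pmat N w j k * ?P2 k l) * (x j * x l))"
    by (intro sum.cong refl)
       (simp add: statdist_pmat_reversible sum_distrib_left sum_distrib_right mult_ac)
  also have "\<dots> = pi_inner N w 3 x x"
    unfolding pi_inner_def matpow.simps(2)[of N _ 2, unfolded Suc_numeral, simplified] ..
  finally show ?thesis .
qed

end

section \<open>The two-layer chain under weak selection\<close>

definition birth_prob :: "nat \<Rightarrow> (nat \<Rightarrow> nat \<Rightarrow> real) \<Rightarrow> (nat \<Rightarrow> real) \<Rightarrow> nat \<Rightarrow> nat \<Rightarrow> real" where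
  "birth_prob N w F a b = w a b * F b / (\<Sum>k<N. w a k * F k)"

lemma layer_trans_expect:
  assumes X: "X \<subseteq> {..<N}"
  shows "(\<Sum>Y\<in>Pow {..<N}. layer_trans N w F X Y * h Y)
       = (\<Sum>a<N. \<Sum>b<N. (1 / real N) * birth_prob N w F a b * h (replace X a b))"
proof -
  have pick: "(\<Sum>Y\<in>Pow {..<N}. (if Y = replace X a b then v else 0) * h Y) = v * h (replace X a b)"
    if "a < N" for a b and v :: real
  proof -
    have "replace X a b \<in> Pow {..<N}" using X that by (auto simp: replace_def)
    then show ?thesis by (simp add: if_distrib[of "\<lambda>c. c * h _"] cong: if_cong)
  qed
  have "(\<Sum>Y\<in>Pow {..<N}. layer_trans N w F X Y * h Y)
      = (\<Sum>Y\<in>Pow {..<N}. \<Sum>a<N. \<Sum>b<N.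
          (if Y = replace X a b then (1 / real N) * birth_prob N w F a b else 0) * h Y)"
    unfolding layer_trans_def birth_prob_def
    by (intro sum.cong refl) (auto simp: sum_distrib_left sum_distrib_right intro!: sum.cong)
  also have "\<dots> = (\<Sum>a<N. \<Sum>b<N. \<Sum>Y\<in>Pow {..<N}.
          (if Y = replace X a b then (1 / real N) * birth_prob N w F a b else 0) * h Y)"
    by (subst sum.swap, subst (2) sum.swap) (rule refl)
  finally show ?thesis by (simp add: pick)
qed

lemma layer_trans_nonzero: "layer_trans N w F X Y \<noteq> 0 \<Longrightarrow> \<exists>a<N. \<exists>b<N. Y = replace X a b"
  unfolding layer_trans_def by (rule ccontr) auto

lemma layer_trans_nonneg:
  "(\<And>a b. a < N \<Longrightarrow> b < N \<Longrightarrow> 0 \<le> birth_prob N w F a b) \<Longrightarrow> 0 \<le> layer_trans N w F X Y"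
  unfolding layer_trans_def birth_prob_def by (intro sum_nonneg mult_nonneg_nonneg) auto

lemma sum_weight_const: "(\<Sum>k<N. w a k * z) = strength N w a * z"
  by (simp add: strength_def sum_distrib_right)

text \<open>Lower bound for the probability of a single birth along an edge: death picks \<open>a\<close> with
  probability \<open>1/N\<close>, and under weak selection fecundities differ at most by a factor 3.\<close>

definition edge_prob_min :: "nat \<Rightarrow> (nat \<Rightarrow> nat \<Rightarrow> real) \<Rightarrow> real" where
  "edge_prob_min N w =
     Min (insert (1/2) {pmat N w a b / (3 * real N) | a b. a < N \<and> b < N \<and> 0 < w a b})"

lemma (in graph_layer) edge_prob_min:
  shows "0 < edge_prob_min N w" "edge_prob_min N w \<le> 1/2"
    and "a < N \<Longrightarrow> b < N \<Longrightarrow> 0 < w a b \<Longrightarrow> edge_prob_min N w \<le> pmat N w a b / (3 * real N)"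
proof -
  let ?E = "{pmat N w a b / (3 * real N) | a b. a < N \<and> b < N \<and> 0 < w a b}"
  have "?E \<subseteq> (\<lambda>(a, b). pmat N w a b / (3 * real N)) ` ({..<N} \<times> {..<N})" by auto
  then have fin: "finite ?E" by (rule finite_subset) simp
  show "0 < edge_prob_min N w"
    unfolding edge_prob_min_def using fin N_pos by (auto simp: pmat_pos)
  show "edge_prob_min N w \<le> 1/2"
    unfolding edge_prob_min_def using fin by (intro Min_le) auto
  show "edge_prob_min N w \<le> pmat N w a b / (3 * real N)" if "a < N" "b < N" "0 < w a b"
    unfolding edge_prob_min_def using fin that by (intro Min_le) auto
qed

locale two_layer =
  fixes N :: nat and w1 w2 :: "nat \<Rightarrow> nat \<Rightarrow> real" and b c r :: real
  assumes N2: "2 \<le> N" and valid1: "valid_layer N w1" and valid2: "valid_layer N w2"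
begin

sublocale L1: graph_layer N w1
  using N2 valid1 by unfold_locales auto

sublocale L2: graph_layer N w2
  using N2 valid2 by unfold_locales auto

abbreviation "S \<equiv> states N"
abbreviation "T \<delta> \<equiv> trans N w1 w2 b c r \<delta>"
abbreviation "Fe \<delta> x \<equiv> fecundity N w1 b c r \<delta> x"
abbreviation "u x \<equiv> payoff N w1 b c r x"

definition "payoff_max = \<bar>c\<bar> + \<bar>b\<bar> + \<bar>r - 1\<bar> + 1"

text \<open>Selection strengths in \<open>{0..delta_max}\<close> keep all fecundities within \<open>[1/2, 3/2]\<close>.\<close>

definition "delta_max = 1 / (2 * payoff_max)"

lemma payoff_max_ge_1: "1 \<le> payoff_max"
  by (simp add: payoff_max_def)

lemma delta_max_pos: "0 < delta_max"
  using payoff_max_ge_1 by (simp add: delta_max_def)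

lemma finite_states: "finite S"
  by (simp add: states_def)

lemma states_subset: "x \<in> S \<Longrightarrow> fst x \<subseteq> {..<N} \<and> snd x \<subseteq> {..<N}"
  by (auto simp: states_def)

lemma abs_payoff_le: "i < N \<Longrightarrow> \<bar>u x i\<bar> \<le> payoff_max"
proof -
  assume i: "i < N"
  have "\<bar>\<Sum>j<N. b * pmat N w1 i j * ind (fst x) j\<bar> \<le> (\<Sum>j<N. \<bar>b\<bar> * pmat N w1 i j)"
    by (rule order_trans[OF sum_abs], rule sum_mono)
       (use L1.pmat_nonneg[OF i] ind_01 in \<open>auto simp: abs_mult intro!: mult_left_le\<close>)
  also have "\<dots> = \<bar>b\<bar>" using L1.pmat_row_sum[OF i] by (simp flip: sum_distrib_left)
  finally have "\<bar>\<Sum>j<N. b * pmat N w1 i j * ind (fst x) j\<bar> \<le> \<bar>b\<bar>" .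
  moreover have "\<bar>- c * ind (fst x) i\<bar> \<le> \<bar>c\<bar>" "\<bar>(r - 1) * ind (snd x) i\<bar> \<le> \<bar>r - 1\<bar>"
    using ind_01[of "fst x" i] ind_01[of "snd x" i] by (auto simp: abs_mult)
  ultimately show ?thesis unfolding payoff_def payoff_max_def by linarith
qed

lemma fecundity_bounds: "\<delta> \<in> {0..delta_max} \<Longrightarrow> i < N \<Longrightarrow> 1/2 \<le> Fe \<delta> x i \<and> Fe \<delta> x i \<le> 3/2"
proof -
  assume d: "\<delta> \<in> {0..delta_max}" and i: "i < N"
  have "\<bar>\<delta> * u x i\<bar> \<le> delta_max * payoff_max"
    using d abs_payoff_le[OF i, of x] by (auto simp: abs_mult intro!: mult_mono)
  also have "\<dots> = 1/2" using payoff_max_ge_1 by (simp add: delta_max_def)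
  finally show ?thesis by (auto simp: fecundity_def)
qed

lemma weighted_fecundity_bounds:
  assumes w: "graph_layer N w" and d: "\<delta> \<in> {0..delta_max}" and a: "a < N"
  shows "strength N w a / 2 \<le> (\<Sum>k<N. w a k * Fe \<delta> x k)"
    and "(\<Sum>k<N. w a k * Fe \<delta> x k) \<le> 3/2 * strength N w a"
proof -
  have "(\<Sum>k<N. w a k * (1/2)) \<le> (\<Sum>k<N. w a k * Fe \<delta> x k)"
    by (rule sum_mono, rule mult_left_mono)
       (use fecundity_bounds[OF d] graph_layer.weight_nonneg[OF w a] in auto)
  then show "strength N w a / 2 \<le> (\<Sum>k<N. w a k * Fe \<delta> x k)"
    by (simp only: sum_weight_const)
  have "(\<Sum>k<N. w a k * Fe \<delta> x k) \<le> (\<Sum>k<N. w a k * (3/2))"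
    by (rule sum_mono, rule mult_left_mono)
       (use fecundity_bounds[OF d] graph_layer.weight_nonneg[OF w a] in auto)
  then show "(\<Sum>k<N. w a k * Fe \<delta> x k) \<le> 3/2 * strength N w a"
    by (simp only: sum_weight_const mult.commute)
qed

lemma weighted_fecundity_pos:
  "graph_layer N w \<Longrightarrow> \<delta> \<in> {0..delta_max} \<Longrightarrow> a < N \<Longrightarrow> 0 < (\<Sum>k<N. w a k * Fe \<delta> x k)"
  using weighted_fecundity_bounds(1)[of w \<delta> a x] graph_layer.strength_pos[of N w a] by force

lemma birth_prob_nonneg:
  "graph_layer N w \<Longrightarrow> \<delta> \<in> {0..delta_max} \<Longrightarrow> a < N \<Longrightarrow> b' < N \<Longrightarrow> 0 \<le> birth_prob N w (Fe \<delta> x) a b'"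
  unfolding birth_prob_def
  using weighted_fecundity_pos[of w \<delta> a x] fecundity_bounds[of \<delta> b' x] graph_layer.weight_nonneg[of N w a b']
  by (intro divide_nonneg_pos mult_nonneg_nonneg) auto

lemma birth_prob_row_sum:
  "graph_layer N w \<Longrightarrow> \<delta> \<in> {0..delta_max} \<Longrightarrow> a < N \<Longrightarrow> (\<Sum>b'<N. birth_prob N w (Fe \<delta> x) a b') = 1"
  unfolding birth_prob_def using weighted_fecundity_pos[of w \<delta> a x]
  by (simp flip: sum_divide_distrib)

lemma birth_prob_total:
  "graph_layer N w \<Longrightarrow> \<delta> \<in> {0..delta_max} \<Longrightarrow>
    (\<Sum>a<N. \<Sum>b'<N. (1 / real N) * birth_prob N w (Fe \<delta> x) a b') = 1"
  using birth_prob_row_sum[of w \<delta> _ x] graph_layer.N_pos[of N w]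
  by (simp add: sum_divide_distrib[symmetric])

lemma birth_prob_ge:
  assumes w: "graph_layer N w" and d: "\<delta> \<in> {0..delta_max}" and a: "a < N" and b': "b' < N"
  shows "pmat N w a b' / 3 \<le> birth_prob N w (Fe \<delta> x) a b'"
proof -
  have s: "0 < strength N w a" using graph_layer.strength_pos[OF w a] .
  have wab: "0 \<le> w a b'" using graph_layer.weight_nonneg[OF w a b'] .
  have "pmat N w a b' / 3 = w a b' * (1/2) / (3/2 * strength N w a)"
    using s by (simp add: pmat_def)
  also have "\<dots> \<le> w a b' * Fe \<delta> x b' / (3/2 * strength N w a)"
    using fecundity_bounds[OF d b', of x] wab s by (intro divide_right_mono mult_left_mono) auto
  also have "\<dots> \<le> w a b' * Fe \<delta> x b' / (\<Sum>k<N. w a k * Fe \<delta> x k)"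
    using weighted_fecundity_bounds[OF w d a, of x] weighted_fecundity_pos[OF w d a, of x]
      fecundity_bounds[OF d b', of x] wab
    by (intro divide_left_mono mult_nonneg_nonneg) auto
  finally show ?thesis by (simp add: birth_prob_def)
qed

lemma mc_expect_trans_1:
  assumes x: "x \<in> S"
  shows "mc_expect (T \<delta>) S 1 h x =
    (\<Sum>a<N. \<Sum>b'<N. (1 / real N) * birth_prob N w1 (Fe \<delta> x) a b' *
      (\<Sum>a2<N. \<Sum>b2<N. (1 / real N) * birth_prob N w2 (Fe \<delta> x) a2 b2 *
        h (replace (fst x) a b', replace (snd x) a2 b2)))"
proof -
  have "mc_expect (T \<delta>) S 1 h x = (\<Sum>y\<in>Pow {..<N} \<times> Pow {..<N}. T \<delta> x y * h y)"
    by (simp only: mc_expect_1[OF finite_states]) (simp add: states_def)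
  also have "\<dots> = (\<Sum>Y1\<in>Pow {..<N}. \<Sum>Y2\<in>Pow {..<N}. T \<delta> x (Y1, Y2) * h (Y1, Y2))"
    unfolding sum.cartesian_product by (simp add: case_prod_unfold)
  also have "\<dots> = (\<Sum>Y1\<in>Pow {..<N}. layer_trans N w1 (Fe \<delta> x) (fst x) Y1 *
       (\<Sum>Y2\<in>Pow {..<N}. layer_trans N w2 (Fe \<delta> x) (snd x) Y2 * h (Y1, Y2)))"
    by (simp add: trans_def sum_distrib_left mult.assoc)
  also have "\<dots> = (\<Sum>Y1\<in>Pow {..<N}. layer_trans N w1 (Fe \<delta> x) (fst x) Y1 *
       (\<Sum>a2<N. \<Sum>b2<N. (1 / real N) * birth_prob N w2 (Fe \<delta> x) a2 b2 * h (Y1, replace (snd x) a2 b2)))"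
    using states_subset[OF x] by (simp add: layer_trans_expect)
  also have "\<dots> = (\<Sum>a<N. \<Sum>b'<N. (1 / real N) * birth_prob N w1 (Fe \<delta> x) a b' *
      (\<Sum>a2<N. \<Sum>b2<N. (1 / real N) * birth_prob N w2 (Fe \<delta> x) a2 b2 *
        h (replace (fst x) a b', replace (snd x) a2 b2)))"
    by (rule layer_trans_expect[where h = "\<lambda>Y1. \<Sum>a2<N. \<Sum>b2<N.
          (1 / real N) * birth_prob N w2 (Fe \<delta> x) a2 b2 * h (Y1, replace (snd x) a2 b2)"])
       (use states_subset[OF x] in auto)
  finally show ?thesis .
qed

lemma mc_expect_trans_fst:
  assumes x: "x \<in> S" and d: "\<delta> \<in> {0..delta_max}"
  shows "mc_expect (T \<delta>) S 1 (\<lambda>y. g (fst y)) x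
    = (\<Sum>a<N. \<Sum>b'<N. (1 / real N) * birth_prob N w1 (Fe \<delta> x) a b' * g (replace (fst x) a b'))"
proof -
  have "(\<Sum>a2<N. \<Sum>b2<N. (1 / real N) * birth_prob N w2 (Fe \<delta> x) a2 b2 * g Y)
      = (\<Sum>a2<N. \<Sum>b2<N. (1 / real N) * birth_prob N w2 (Fe \<delta> x) a2 b2) * g Y" for Y
    by (simp only: sum_distrib_right)
  then have "(\<Sum>a2<N. \<Sum>b2<N. (1 / real N) * birth_prob N w2 (Fe \<delta> x) a2 b2 * g Y) = g Y" for Y
    using birth_prob_total[OF L2.graph_layer_axioms d, of x] by simp
  then show ?thesis by (simp only: mc_expect_trans_1[OF x] fst_conv)
qed

lemma mc_expect_trans_snd:
  assumes x: "x \<in> S" and d: "\<delta> \<in> {0..delta_max}"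
  shows "mc_expect (T \<delta>) S 1 (\<lambda>y. g (snd y)) x
    = (\<Sum>a<N. \<Sum>b'<N. (1 / real N) * birth_prob N w2 (Fe \<delta> x) a b' * g (replace (snd x) a b'))"
proof -
  have "(\<Sum>a<N. \<Sum>b'<N. (1 / real N) * birth_prob N w1 (Fe \<delta> x) a b' * z)
      = (\<Sum>a<N. \<Sum>b'<N. (1 / real N) * birth_prob N w1 (Fe \<delta> x) a b') * z" for z
    by (simp only: sum_distrib_right)
  then have "(\<Sum>a<N. \<Sum>b'<N. (1 / real N) * birth_prob N w1 (Fe \<delta> x) a b' * z) = z" for z
    using birth_prob_total[OF L1.graph_layer_axioms d, of x] by simp
  then show ?thesis by (simp only: mc_expect_trans_1[OF x] snd_conv)
qed

lemma stochastic_trans: "\<delta> \<in> {0..delta_max} \<Longrightarrow> stochastic (T \<delta>) S"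
proof -
  assume d: "\<delta> \<in> {0..delta_max}"
  have "0 \<le> T \<delta> x y" for x y
    unfolding trans_def
    by (intro mult_nonneg_nonneg layer_trans_nonneg birth_prob_nonneg[OF L1.graph_layer_axioms d]
        birth_prob_nonneg[OF L2.graph_layer_axioms d])
  moreover have "(\<Sum>y\<in>S. T \<delta> x y) = 1" if x: "x \<in> S" for x
  proof -
    have "(\<Sum>y\<in>S. T \<delta> x y) = mc_expect (T \<delta>) S 1 (\<lambda>y. (\<lambda>_. 1) (fst y)) x"
      by (simp only: mc_expect_1[OF finite_states]) simp
    also have "\<dots> = 1"
      using mc_expect_trans_fst[OF x d, of "\<lambda>_. 1"] birth_prob_total[OF L1.graph_layer_axioms d, of x]
      by simp
    finally show ?thesis .
  qed
  ultimately show ?thesis using finite_states by (simp add: stochastic_def)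
qed

lemma trans_monomorphic:
  assumes "T \<delta> x y \<noteq> 0"
  shows "fst x = {} \<or> fst x = {..<N} \<Longrightarrow> fst y = fst x"
    and "snd x = {} \<or> snd x = {..<N} \<Longrightarrow> snd y = snd x"
  using assms layer_trans_nonzero replace_monomorphic unfolding trans_def
  by (metis mult_zero_left, metis mult_zero_right)

lemma layer_gain_prob:
  assumes w: "graph_layer N w" and d: "\<delta> \<in> {0..delta_max}"
    and X: "X \<subseteq> {..<N}" "X \<noteq> {}" "X \<noteq> {..<N}"
  shows "\<exists>a<N. a \<notin> X \<and> edge_prob_min N w \<le> (\<Sum>a'<N. \<Sum>b'<N.
    (1 / real N) * birth_prob N w (Fe \<delta> x) a' b' * (if replace X a' b' = insert a X then 1 else 0))"
proof -
  obtain a b' where ab: "a < N" "b' < N" "a \<notin> X" "b' \<in> X" "0 < w a b'"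
    using graph_layer.exists_edge_into[OF w X] by blast
  have "edge_prob_min N w \<le> (1 / real N) * (pmat N w a b' / 3)"
    using graph_layer.edge_prob_min(3)[OF w ab(1,2,5)] by simp
  also have "\<dots> \<le> (1 / real N) * birth_prob N w (Fe \<delta> x) a b'"
    using birth_prob_ge[OF w d ab(1,2)] by (intro mult_left_mono) auto
  also have "\<dots> = (1 / real N) * birth_prob N w (Fe \<delta> x) a b'
      * (if replace X a b' = insert a X then 1 else 0)"
    using ab by (simp add: replace_def)
  also have "\<dots> \<le> (\<Sum>b2<N. (1 / real N) * birth_prob N w (Fe \<delta> x) a b2
      * (if replace X a b2 = insert a X then 1 else 0))"
    using ab(2) birth_prob_nonneg[OF w d ab(1)] by (intro member_le_sum) auto
  also have "\<dots> \<le> (\<Sum>a'<N. \<Sum>b2<N. (1 / real N) * birth_prob N w (Fe \<delta> x) a' b2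
      * (if replace X a' b2 = insert a X then 1 else 0))"
    using ab(1) birth_prob_nonneg[OF w d]
    by (intro member_le_sum[of a _ "\<lambda>a'. \<Sum>b2<N. _ a' b2"] sum_nonneg) auto
  finally show ?thesis using ab by blast
qed

definition "eps_min = min (edge_prob_min N w1) (edge_prob_min N w2)"

lemma eps_min: "0 < eps_min" "eps_min \<le> 1/2"
  using L1.edge_prob_min L2.edge_prob_min by (auto simp: eps_min_def)

lemma fixating_fst: "\<delta> \<in> {0..delta_max} \<Longrightarrow> fixating_chain (T \<delta>) S fst N eps_min"
proof (unfold_locales)
  fix z assume d: "\<delta> \<in> {0..delta_max}" and z: "z \<in> S" "fst z \<noteq> {}" "fst z \<noteq> {..<N}"
  obtain a where "a < N" "a \<notin> fst z" and "edge_prob_min N w1 \<le> (\<Sum>a'<N. \<Sum>b'<N.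
      (1 / real N) * birth_prob N w1 (Fe \<delta> z) a' b' * (if replace (fst z) a' b' = insert a (fst z) then 1 else 0))"
    using layer_gain_prob[OF L1.graph_layer_axioms d _ z(2,3), of z] states_subset[OF z(1)] by blast
  then show "\<exists>a<N. a \<notin> fst z \<and>
      eps_min \<le> mc_expect (T \<delta>) S 1 (\<lambda>y. if fst y = insert a (fst z) then 1 else 0) z"
    using mc_expect_trans_fst[OF z(1) d, of "\<lambda>Y. if Y = insert a (fst z) then 1 else 0"]
    by (auto simp: eps_min_def)
qed (use stochastic_trans states_subset trans_monomorphic eps_min in auto)

lemma fixating_snd: "\<delta> \<in> {0..delta_max} \<Longrightarrow> fixating_chain (T \<delta>) S snd N eps_min"
proof (unfold_locales)
  fix z assume d: "\<delta> \<in> {0..delta_max}" and z: "z \<in> S" "snd z \<noteq> {}" "snd z \<noteq> {..<N}"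
  obtain a where "a < N" "a \<notin> snd z" and "edge_prob_min N w2 \<le> (\<Sum>a'<N. \<Sum>b'<N.
      (1 / real N) * birth_prob N w2 (Fe \<delta> z) a' b' * (if replace (snd z) a' b' = insert a (snd z) then 1 else 0))"
    using layer_gain_prob[OF L2.graph_layer_axioms d _ z(2,3), of z] states_subset[OF z(1)] by blast
  then show "\<exists>a<N. a \<notin> snd z \<and>
      eps_min \<le> mc_expect (T \<delta>) S 1 (\<lambda>y. if snd y = insert a (snd z) then 1 else 0) z"
    using mc_expect_trans_snd[OF z(1) d, of "\<lambda>Y. if Y = insert a (snd z) then 1 else 0"]
    by (auto simp: eps_min_def)
qed (use stochastic_trans states_subset trans_monomorphic eps_min in auto)

definition "decay = 1 - eps_min ^ N"

lemma decay: "0 < decay" "decay < 1"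
proof -
  have "eps_min ^ N \<le> (1/2) ^ N" using eps_min by (intro power_mono) auto
  also have "\<dots> < 1" using N2 by (simp add: power_less_one_iff)
  finally show "0 < decay" by (simp add: decay_def)
  show "decay < 1" using eps_min by (simp add: decay_def)
qed

lemma summable_decay: "summable (\<lambda>t. decay ^ (t div N))"
  using decay N2 by (intro summable_power_div) auto

lemma mixed_fst_decay:
  "\<delta> \<in> {0..delta_max} \<Longrightarrow> x \<in> S \<Longrightarrow> mc_expect (T \<delta>) S t (mixed fst N) x \<le> decay ^ (t div N)"
  unfolding decay_def by (rule fixating_chain.mc_expect_mixed_le[OF fixating_fst])

lemma mixed_snd_decay:
  "\<delta> \<in> {0..delta_max} \<Longrightarrow> x \<in> S \<Longrightarrow> mc_expect (T \<delta>) S t (mixed snd N) x \<le> decay ^ (t div N)"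
  unfolding decay_def by (rule fixating_chain.mc_expect_mixed_le[OF fixating_snd])

abbreviation "s1 a \<equiv> strength N w1 a"
abbreviation "coop_freq x \<equiv> meanstate N w1 (fst x)"

definition "nbr_payoff x a = (\<Sum>k<N. w1 a k * u x k)"
definition "nbr_fecundity \<delta> x a = (\<Sum>k<N. w1 a k * Fe \<delta> x k)"

text \<open>The expected one-step change of \<open>coop_freq\<close> divided by \<open>\<delta>\<close>
  (\<open>mc_expect_coop_freq_1\<close>), written so that it stays meaningful at \<open>\<delta> = 0\<close>.\<close>

definition "drift \<delta> x = (1 / real N) * (\<Sum>a<N. statdist N w1 a *
    (\<Sum>b'<N. w1 a b' * (u x b' * s1 a - nbr_payoff x a) / (s1 a * nbr_fecundity \<delta> x a) * ind (fst x) b'))"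

lemma nbr_fecundity_eq: "nbr_fecundity \<delta> x a = s1 a + \<delta> * nbr_payoff x a"
  by (simp add: nbr_fecundity_def nbr_payoff_def fecundity_def strength_def algebra_simps
      sum.distrib sum_distrib_left)

lemma nbr_fecundity_pos: "\<delta> \<in> {0..delta_max} \<Longrightarrow> a < N \<Longrightarrow> 0 < nbr_fecundity \<delta> x a"
  unfolding nbr_fecundity_def by (rule weighted_fecundity_pos[OF L1.graph_layer_axioms])

lemma birth_prob_diff:
  assumes d: "\<delta> \<in> {0..delta_max}" and a: "a < N"
  shows "birth_prob N w1 (Fe \<delta> x) a b' - pmat N w1 a b'
    = \<delta> * (w1 a b' * (u x b' * s1 a - nbr_payoff x a) / (s1 a * nbr_fecundity \<delta> x a))"
proof -
  have s: "s1 a > 0" using L1.strength_pos[OF a] .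
  have D: "nbr_fecundity \<delta> x a > 0" using nbr_fecundity_pos[OF d a] .
  have "birth_prob N w1 (Fe \<delta> x) a b' = w1 a b' * (1 + \<delta> * u x b') / nbr_fecundity \<delta> x a"
    by (simp add: birth_prob_def nbr_fecundity_def fecundity_def)
  moreover have "w1 a b' * (1 + \<delta> * u x b') / (s1 a + \<delta> * nbr_payoff x a) - w1 a b' / s1 a
      = \<delta> * (w1 a b' * (u x b' * s1 a - nbr_payoff x a) / (s1 a * (s1 a + \<delta> * nbr_payoff x a)))"
    using s D unfolding nbr_fecundity_eq by (simp add: field_simps)
  ultimately show ?thesis unfolding pmat_def nbr_fecundity_eq by simp
qed

lemma mc_expect_coop_freq_1:
  assumes x: "x \<in> S" and d: "\<delta> \<in> {0..delta_max}"
  shows "mc_expect (T \<delta>) S 1 coop_freq x = coop_freq x + \<delta> * drift \<delta> x"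
proof -
  let ?X = "fst x" and ?\<pi> = "statdist N w1"
  let ?e = "\<lambda>a b'. birth_prob N w1 (Fe \<delta> x) a b'" and ?p = "\<lambda>a b'. pmat N w1 a b'"
  let ?gain = "\<lambda>q. \<Sum>a<N. ?\<pi> a * (\<Sum>b'<N. q a b' * ind ?X b')"
  have "mc_expect (T \<delta>) S 1 coop_freq x
      = (\<Sum>a<N. \<Sum>b'<N. (1 / real N) * ?e a b' * coop_freq x
        + (1 / real N) * ?\<pi> a * (?e a b' * ind ?X b') - (1 / real N) * ?\<pi> a * ind ?X a * ?e a b')"
    unfolding mc_expect_trans_fst[OF x d]
    by (intro sum.cong refl) (auto simp: L1.meanstate_replace field_simps)
  also have "\<dots> = (\<Sum>a<N. (1 / real N) * (\<Sum>b'<N. ?e a b') * coop_freq x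
        + (1 / real N) * ?\<pi> a * (\<Sum>b'<N. ?e a b' * ind ?X b')
        - (1 / real N) * ?\<pi> a * ind ?X a * (\<Sum>b'<N. ?e a b'))"
    by (simp add: sum.distrib sum_subtractf sum_distrib_left sum_distrib_right mult.assoc)
  also have "\<dots> = (\<Sum>a<N. (1 / real N) * coop_freq x
        + (1 / real N) * ?\<pi> a * (\<Sum>b'<N. ?e a b' * ind ?X b') - (1 / real N) * ?\<pi> a * ind ?X a)"
    by (intro sum.cong refl) (simp add: birth_prob_row_sum[OF L1.graph_layer_axioms d])
  also have "\<dots> = coop_freq x + (1 / real N) * (?gain ?e - (\<Sum>a<N. ?\<pi> a * ind ?X a))"
    by (simp only: sum.distrib sum_subtractf mult.assoc sum_distrib_left[symmetric])
       (simp add: right_diff_distrib L1.N_pos)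
  also have "(\<Sum>a<N. ?\<pi> a * ind ?X a) = ?gain ?p"
  proof -
    have "?gain ?p = (\<Sum>b'<N. (\<Sum>a<N. ?\<pi> a * ?p a b') * ind ?X b')"
      by (simp add: sum_distrib_left sum_distrib_right mult.assoc) (rule sum.swap)
    then show ?thesis by (simp add: L1.statdist_pmat_stationary)
  qed
  also have "?gain ?e - ?gain ?p = (\<Sum>a<N. ?\<pi> a * (\<Sum>b'<N. (?e a b' - ?p a b') * ind ?X b'))"
    by (simp add: sum_subtractf right_diff_distrib left_diff_distrib)
  also have "\<dots> = \<delta> * (\<Sum>a<N. ?\<pi> a * (\<Sum>b'<N. w1 a b' * (u x b' * s1 a - nbr_payoff x a)
      / (s1 a * nbr_fecundity \<delta> x a) * ind ?X b'))"
    by (simp add: birth_prob_diff[OF d] sum_distrib_left mult_ac)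
  finally show ?thesis unfolding drift_def by (simp add: mult_ac)
qed

lemma drift_monomorphic: "fst x = {} \<or> fst x = {..<N} \<Longrightarrow> drift \<delta> x = 0"
proof (cases "fst x = {}")
  case False
  assume "fst x = {} \<or> fst x = {..<N}"
  with False have all: "fst x = {..<N}" by simp
  have "(\<Sum>b'<N. w1 a b' * (u x b' * s1 a - nbr_payoff x a) / (s1 a * nbr_fecundity \<delta> x a) * ind (fst x) b') = 0"
    for a
  proof -
    have "(\<Sum>b'<N. w1 a b' * (u x b' * s1 a - nbr_payoff x a) / (s1 a * nbr_fecundity \<delta> x a) * ind (fst x) b')
        = (\<Sum>b'<N. s1 a * (w1 a b' * u x b') - nbr_payoff x a * w1 a b') / (s1 a * nbr_fecundity \<delta> x a)"
      by (subst sum_divide_distrib, rule sum.cong) (auto simp: all ind_def algebra_simps)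
    also have "(\<Sum>b'<N. s1 a * (w1 a b' * u x b') - nbr_payoff x a * w1 a b') = 0"
      by (simp add: sum_subtractf nbr_payoff_def strength_def flip: sum_distrib_left)
    finally show ?thesis by simp
  qed
  then show ?thesis by (simp add: drift_def)
qed (simp add: drift_def ind_def)

lemma abs_nbr_payoff_le: "a < N \<Longrightarrow> \<bar>nbr_payoff x a\<bar> \<le> payoff_max * s1 a"
proof -
  assume a: "a < N"
  have "\<bar>nbr_payoff x a\<bar> \<le> (\<Sum>k<N. w1 a k * \<bar>u x k\<bar>)"
    unfolding nbr_payoff_def
    by (rule order_trans[OF sum_abs]) (use L1.weight_nonneg[OF a] in \<open>simp add: abs_mult\<close>)
  also have "\<dots> \<le> (\<Sum>k<N. w1 a k * payoff_max)"
    using L1.weight_nonneg[OF a] abs_payoff_le by (intro sum_mono mult_left_mono) auto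
  finally show ?thesis by (simp add: sum_weight_const mult.commute)
qed

lemma abs_drift_row_le:
  assumes d: "\<delta> \<in> {0..delta_max}" and a: "a < N"
  shows "\<bar>\<Sum>b'<N. w1 a b' * (u x b' * s1 a - nbr_payoff x a) / (s1 a * nbr_fecundity \<delta> x a)
    * ind (fst x) b'\<bar> \<le> 4 * payoff_max"
proof -
  have s: "0 < s1 a" using L1.strength_pos[OF a] .
  have den: "s1 a * (s1 a / 2) \<le> s1 a * nbr_fecundity \<delta> x a"
    using s weighted_fecundity_bounds(1)[OF L1.graph_layer_axioms d a, of x]
    by (simp add: nbr_fecundity_def)
  have entry: "\<bar>w1 a b' * (u x b' * s1 a - nbr_payoff x a) / (s1 a * nbr_fecundity \<delta> x a) * ind (fst x) b'\<bar>
      \<le> w1 a b' * (4 * payoff_max / s1 a)" if b': "b' < N" for b'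
  proof -
    have w: "0 \<le> w1 a b'" using L1.weight_nonneg[OF a b'] .
    have "\<bar>u x b' * s1 a\<bar> \<le> payoff_max * s1 a"
      using abs_payoff_le[OF b', of x] s by (simp add: abs_mult mult_right_mono)
    then have num: "\<bar>u x b' * s1 a - nbr_payoff x a\<bar> \<le> 2 * payoff_max * s1 a"
      using abs_nbr_payoff_le[OF a, of x] by linarith
    have "\<bar>w1 a b' * (u x b' * s1 a - nbr_payoff x a) / (s1 a * nbr_fecundity \<delta> x a) * ind (fst x) b'\<bar>
        \<le> w1 a b' * \<bar>u x b' * s1 a - nbr_payoff x a\<bar> / (s1 a * nbr_fecundity \<delta> x a)"
      using ind_01[of "fst x" b'] w s nbr_fecundity_pos[OF d a, of x] by (auto simp: abs_mult)
    also have "\<dots> \<le> w1 a b' * (2 * payoff_max * s1 a) / (s1 a * (s1 a / 2))"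
      using w num den s payoff_max_ge_1 by (intro frac_le mult_left_mono mult_nonneg_nonneg) auto
    also have "\<dots> = w1 a b' * (4 * payoff_max / s1 a)" using s by (simp add: field_simps)
    finally show ?thesis .
  qed
  have "\<bar>\<Sum>b'<N. w1 a b' * (u x b' * s1 a - nbr_payoff x a) / (s1 a * nbr_fecundity \<delta> x a)
      * ind (fst x) b'\<bar> \<le> (\<Sum>b'<N. w1 a b' * (4 * payoff_max / s1 a))"
    by (rule order_trans[OF sum_abs sum_mono], rule entry) simp
  also have "\<dots> = 4 * payoff_max" using s by (simp only: sum_weight_const) simp
  finally show ?thesis .
qed

lemma abs_drift_le_mixed:
  assumes d: "\<delta> \<in> {0..delta_max}"
  shows "\<bar>drift \<delta> x\<bar> \<le> 4 * payoff_max * mixed fst N x"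
proof (cases "fst x = {} \<or> fst x = {..<N}")
  case False
  have "\<bar>\<Sum>a<N. statdist N w1 a * (\<Sum>b'<N. w1 a b' * (u x b' * s1 a - nbr_payoff x a)
      / (s1 a * nbr_fecundity \<delta> x a) * ind (fst x) b')\<bar> \<le> (\<Sum>a<N. statdist N w1 a * (4 * payoff_max))"
  proof (rule order_trans[OF sum_abs sum_mono])
    fix a assume "a \<in> {..<N}"
    then show "\<bar>statdist N w1 a * (\<Sum>b'<N. w1 a b' * (u x b' * s1 a - nbr_payoff x a)
        / (s1 a * nbr_fecundity \<delta> x a) * ind (fst x) b')\<bar> \<le> statdist N w1 a * (4 * payoff_max)"
      using abs_drift_row_le[OF d, of a x] L1.statdist_pos[of a]
      by (simp add: abs_mult mult_left_mono)
  qed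
  then have "\<bar>drift \<delta> x\<bar> \<le> (1 / real N) * (\<Sum>a<N. statdist N w1 a * (4 * payoff_max))"
    unfolding drift_def using L1.N_pos by (simp add: abs_mult divide_right_mono)
  also have "\<dots> \<le> 4 * payoff_max"
    using L1.N_pos payoff_max_ge_1 by (simp add: L1.statdist_sum_mult field_simps)
  finally show ?thesis using False by (simp add: mixed_def)
qed (simp add: drift_monomorphic mixed_def)

lemma abs_mc_expect_drift_le:
  assumes d: "\<delta> \<in> {0..delta_max}" and x: "x \<in> S"
  shows "\<bar>mc_expect (T \<delta>) S k (drift \<delta>) x\<bar> \<le> 4 * payoff_max * decay ^ (k div N)"
proof -
  have "\<bar>mc_expect (T \<delta>) S k (drift \<delta>) x\<bar> \<le> mc_expect (T \<delta>) S k (\<lambda>y. \<bar>drift \<delta> y\<bar>) x"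
    by (rule mc_expect_abs_le[OF stochastic_trans[OF d] x])
  also have "\<dots> \<le> mc_expect (T \<delta>) S k (\<lambda>y. 4 * payoff_max * mixed fst N y) x"
    by (rule mc_expect_mono[OF stochastic_trans[OF d] x abs_drift_le_mixed[OF d]])
  also have "\<dots> \<le> 4 * payoff_max * decay ^ (k div N)"
    using mixed_fst_decay[OF d x, of k] payoff_max_ge_1 by (simp add: mc_expect_cmult)
  finally show ?thesis .
qed

lemma mc_expect_coop_freq:
  assumes d: "\<delta> \<in> {0..delta_max}" and x: "x \<in> S"
  shows "mc_expect (T \<delta>) S t coop_freq x = coop_freq x + \<delta> * (\<Sum>k<t. mc_expect (T \<delta>) S k (drift \<delta>) x)"
proof (induction t)
  case (Suc t)
  have "mc_expect (T \<delta>) S (Suc t) coop_freq x = mc_expect (T \<delta>) S t (mc_expect (T \<delta>) S 1 coop_freq) x"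
    by (rule mc_expect_Suc_right[OF finite_states x])
  also have "\<dots> = mc_expect (T \<delta>) S t (\<lambda>y. coop_freq y + \<delta> * drift \<delta> y) x"
    by (rule mc_expect_cong, rule mc_expect_coop_freq_1[OF _ d])
  also have "\<dots> = mc_expect (T \<delta>) S t coop_freq x + \<delta> * mc_expect (T \<delta>) S t (drift \<delta>) x"
    by (simp add: mc_expect_add mc_expect_cmult)
  finally show ?case using Suc by (simp add: algebra_simps)
qed (simp add: mc_expect_0[OF finite_states x])


section \<open>The derivative of the fixation probability\<close>

definition "drift_total \<delta> \<xi> = (\<Sum>k. mc_expect (T \<delta>) S k (drift \<delta>) \<xi>)"

lemma summable_drift_bound: "summable (\<lambda>k. 4 * payoff_max * decay ^ (k div N))"
  by (rule summable_mult[OF summable_decay])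

lemma summable_drift:
  "\<delta> \<in> {0..delta_max} \<Longrightarrow> \<xi> \<in> S \<Longrightarrow> summable (\<lambda>k. mc_expect (T \<delta>) S k (drift \<delta>) \<xi>)"
  by (rule summable_comparison_test[OF _ summable_drift_bound]) (use abs_mc_expect_drift_le in auto)

lemma all_coop_approx:
  "\<bar>(if fst y = {..<N} then 1 else 0) - coop_freq y\<bar> \<le> mixed fst N y"
  using L1.meanstate_bounds[of "fst y"] L1.meanstate_monomorphic by (auto simp: mixed_def)

text \<open>Since \<open>coop_freq\<close> agrees with the indicator of full cooperation once layer 1 has fixated,
  and fixation happens geometrically fast, \<open>rho1\<close> is the initial frequency plus the accumulated
  drift.\<close>

lemma rho1_eq:
  assumes d: "\<delta> \<in> {0..delta_max}" and \<xi>: "\<xi> \<in> S"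
  shows "rho1 N w1 w2 b c r \<delta> \<xi> = coop_freq \<xi> + \<delta> * drift_total \<delta> \<xi>"
proof -
  let ?full = "\<lambda>y. if fst y = {..<N} then 1 else (0::real)"
  have st: "stochastic (T \<delta>) S" by (rule stochastic_trans[OF d])
  have "(\<Sum>y\<in>{y \<in> S. fst y = {..<N}}. mc_nstep (T \<delta>) S n \<xi> y) = mc_expect (T \<delta>) S n ?full \<xi>" for n
    unfolding mc_expect_def sum.inter_filter[OF finite_states] by (rule sum.cong) auto
  also have "mc_expect (T \<delta>) S n ?full \<xi> = (coop_freq \<xi> + \<delta> * (\<Sum>k<n. mc_expect (T \<delta>) S k (drift \<delta>) \<xi>))
      + mc_expect (T \<delta>) S n (\<lambda>y. ?full y - coop_freq y) \<xi>" for n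
    using mc_expect_coop_freq[OF d \<xi>, of n] mc_expect_diff[of "T \<delta>" S n ?full coop_freq \<xi>] by simp
  finally have eq: "(\<Sum>y\<in>{y \<in> S. fst y = {..<N}}. mc_nstep (T \<delta>) S n \<xi> y)
      = (coop_freq \<xi> + \<delta> * (\<Sum>k<n. mc_expect (T \<delta>) S k (drift \<delta>) \<xi>))
      + mc_expect (T \<delta>) S n (\<lambda>y. ?full y - coop_freq y) \<xi>" for n .
  have "(\<lambda>n. coop_freq \<xi> + \<delta> * (\<Sum>k<n. mc_expect (T \<delta>) S k (drift \<delta>) \<xi>))
      \<longlonglongrightarrow> coop_freq \<xi> + \<delta> * drift_total \<delta> \<xi>"
    unfolding drift_total_def by (intro tendsto_intros summable_LIMSEQ summable_drift[OF d \<xi>])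
  moreover have "(\<lambda>n. mc_expect (T \<delta>) S n (\<lambda>y. ?full y - coop_freq y) \<xi>) \<longlonglongrightarrow> 0"
  proof (rule Lim_null_comparison[OF always_eventually summable_LIMSEQ_zero[OF summable_decay]], rule allI)
    fix n
    have "\<bar>mc_expect (T \<delta>) S n (\<lambda>y. ?full y - coop_freq y) \<xi>\<bar>
        \<le> mc_expect (T \<delta>) S n (\<lambda>y. \<bar>?full y - coop_freq y\<bar>) \<xi>"
      by (rule mc_expect_abs_le[OF st \<xi>])
    also have "\<dots> \<le> mc_expect (T \<delta>) S n (mixed fst N) \<xi>"
      by (rule mc_expect_mono[OF st \<xi> all_coop_approx])
    also have "\<dots> \<le> decay ^ (n div N)" by (rule mixed_fst_decay[OF d \<xi>])
    finally show "norm (mc_expect (T \<delta>) S n (\<lambda>y. ?full y - coop_freq y) \<xi>) \<le> decay ^ (n div N)"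
      by simp
  qed
  ultimately have "(\<lambda>n. \<Sum>y\<in>{y \<in> S. fst y = {..<N}}. mc_nstep (T \<delta>) S n \<xi> y)
      \<longlonglongrightarrow> coop_freq \<xi> + \<delta> * drift_total \<delta> \<xi>"
    unfolding eq using tendsto_add by fastforce
  then show ?thesis unfolding rho1_def by (rule limI)
qed

lemma continuous_on_fecundity: "continuous_on A (\<lambda>\<delta>. Fe \<delta> x k)"
  unfolding fecundity_def by (intro continuous_intros)

lemma continuous_on_layer_trans:
  assumes w: "graph_layer N w"
  shows "continuous_on {0..delta_max} (\<lambda>\<delta>. layer_trans N w (Fe \<delta> x) X Y)"
proof -
  have "(if P then v else 0) = of_bool P * v" for P and v :: real by simp
  then show ?thesis
    unfolding layer_trans_def
    by (simp only:) (intro continuous_intros continuous_on_fecundity,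
        use weighted_fecundity_pos[OF w] in \<open>auto simp: less_imp_neq[symmetric]\<close>)
qed

lemma continuous_on_mc_nstep: "continuous_on {0..delta_max} (\<lambda>\<delta>. mc_nstep (T \<delta>) S k x y)"
proof (induction k arbitrary: x)
  case (Suc k)
  have "continuous_on {0..delta_max} (\<lambda>\<delta>. T \<delta> x z)" for z
    unfolding trans_def
    by (intro continuous_intros continuous_on_layer_trans L1.graph_layer_axioms L2.graph_layer_axioms)
  with Suc show ?case by (simp add: continuous_on_sum continuous_on_mult)
qed simp

lemma continuous_on_drift: "continuous_on {0..delta_max} (\<lambda>\<delta>. drift \<delta> y)"
  unfolding drift_def nbr_fecundity_def
  by (intro continuous_intros continuous_on_fecundity)
     (use weighted_fecundity_pos[OF L1.graph_layer_axioms] L1.strength_pos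
      in \<open>auto simp: less_imp_neq[symmetric]\<close>)

lemma continuous_on_drift_total:
  assumes \<xi>: "\<xi> \<in> S"
  shows "continuous_on {0..delta_max} (\<lambda>\<delta>. drift_total \<delta> \<xi>)"
proof -
  have "uniform_limit {0..delta_max} (\<lambda>n \<delta>. \<Sum>i<n. mc_expect (T \<delta>) S i (drift \<delta>) \<xi>)
      (\<lambda>\<delta>. \<Sum>i. mc_expect (T \<delta>) S i (drift \<delta>) \<xi>) sequentially"
    by (rule Weierstrass_m_test[OF _ summable_drift_bound]) (use abs_mc_expect_drift_le[OF _ \<xi>] in auto)
  then show ?thesis
    unfolding drift_total_def mc_expect_def
    by (rule uniform_limit_theorem[rotated])
       (auto intro!: always_eventually continuous_intros continuous_on_mc_nstep continuous_on_drift)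
qed

lemma rho1_has_derivative:
  assumes \<xi>: "\<xi> \<in> S"
  shows "((\<lambda>\<delta>. rho1 N w1 w2 b c r \<delta> \<xi>) has_real_derivative drift_total 0 \<xi>) (at 0 within {0..})"
proof -
  let ?rho = "\<lambda>\<delta>. rho1 N w1 w2 b c r \<delta> \<xi>"
  \<comment> \<open>Caratheodory slope; outside \<open>{0..delta_max}\<close> it is the difference quotient.\<close>
  define g where "g z = (if z \<in> {0..delta_max} then drift_total z \<xi> else (?rho z - ?rho 0) / z)" for z
  have rho0: "?rho 0 = coop_freq \<xi>" using rho1_eq[of 0 \<xi>] delta_max_pos \<xi> by simp
  have "?rho z - ?rho 0 = g z * (z - 0)" for z
  proof (cases "z \<in> {0..delta_max}")
    case True then show ?thesis using rho1_eq[OF True \<xi>] rho0 by (simp add: g_def)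
  next
    case False
    then have "z \<noteq> 0" using delta_max_pos by auto
    with False show ?thesis unfolding g_def by (simp del: atLeastAtMost_iff)
  qed
  moreover have g0: "g 0 = drift_total 0 \<xi>" using delta_max_pos by (simp add: g_def)
  moreover have "continuous (at 0 within {0..}) g"
  proof -
    have "((\<lambda>z. drift_total z \<xi>) \<longlongrightarrow> drift_total 0 \<xi>) (at 0 within {0..delta_max})"
      using continuous_on_drift_total[OF \<xi>] delta_max_pos unfolding continuous_on_def by auto
    moreover have "eventually (\<lambda>z. drift_total z \<xi> = g z) (at 0 within {0..delta_max})"
      unfolding eventually_at_filter by (auto simp: g_def)
    ultimately have "(g \<longlongrightarrow> g 0) (at 0 within {0..delta_max})"
      unfolding g0 by (rule Lim_transform_eventually)
    then show ?thesis
      using delta_max_pos by (simp add: continuous_within at_within_Icc_at_right at_within_Ici_at_right)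
  qed
  ultimately show ?thesis unfolding DERIV_caratheodory_within by blast
qed

lemma birth_prob_neutral: "birth_prob N w (Fe 0 x) a b' = pmat N w a b'"
  by (simp add: fecundity_def birth_prob_def pmat_def strength_def)

lemma mc_expect_neutral_fst:
  "x \<in> S \<Longrightarrow> mc_expect (T 0) S 1 (\<lambda>y. g (fst y)) x = neutral_step N w1 g (fst x)"
  using mc_expect_trans_fst[of x 0 g] delta_max_pos by (simp add: birth_prob_neutral neutral_step_def)

lemma mc_expect_neutral_prod:
  assumes x: "x \<in> S"
  shows "mc_expect (T 0) S 1 (\<lambda>y. g1 (fst y) * g2 (snd y)) x
    = neutral_step N w1 g1 (fst x) * neutral_step N w2 g2 (snd x)"
proof -
  have "mc_expect (T 0) S 1 (\<lambda>y. g1 (fst y) * g2 (snd y)) x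
    = (\<Sum>a<N. \<Sum>b'<N. (1 / real N) * pmat N w1 a b' * (\<Sum>a2<N. \<Sum>b2<N.
        (1 / real N) * pmat N w2 a2 b2 * (g1 (replace (fst x) a b') * g2 (replace (snd x) a2 b2))))"
    by (simp only: mc_expect_trans_1[OF x] birth_prob_neutral fst_conv snd_conv)
  also have "\<dots> = (\<Sum>a<N. \<Sum>b'<N. (1 / real N) * pmat N w1 a b' * g1 (replace (fst x) a b')
      * neutral_step N w2 g2 (snd x))"
    by (simp add: neutral_step_def sum_distrib_left mult_ac)
  finally show ?thesis by (simp add: neutral_step_def sum_distrib_right)
qed

lemma mc_expect_neutral_coop_freq:
  assumes "x \<in> S"
  shows "mc_expect (T 0) S t coop_freq x = coop_freq x"
proof (rule mc_expect_invariant[OF finite_states assms])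
  show "mc_expect (T 0) S 1 coop_freq y = coop_freq y" if "y \<in> S" for y
    using mc_expect_neutral_fst[OF that, of "meanstate N w1"] L1.neutral_step_meanstate by simp
qed

lemma mc_expect_neutral_freq_prod:
  assumes "x \<in> S"
  shows "mc_expect (T 0) S t (\<lambda>y. coop_freq y * meanstate N w2 (snd y)) x
    = coop_freq x * meanstate N w2 (snd x)"
proof (rule mc_expect_invariant[OF finite_states assms])
  show "mc_expect (T 0) S 1 (\<lambda>y. coop_freq y * meanstate N w2 (snd y)) y
      = coop_freq y * meanstate N w2 (snd y)" if "y \<in> S" for y
    using mc_expect_neutral_prod[OF that, of "meanstate N w1" "meanstate N w2"]
      L1.neutral_step_meanstate L2.neutral_step_meanstate by simp
qed


section \<open>The derivative in terms of \<open>\<theta>\<close> and \<open>\<phi>\<close>\<close>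

lemma drift_neutral_nbr:
  "drift 0 y = (1 / real N) * (nbr_avg_prod N w1 (u y) (ind (fst y)) - nbr_prod_avg N w1 (u y) (ind (fst y)))"
proof -
  have row: "(\<Sum>b'<N. w1 a b' * (u y b' * s1 a - nbr_payoff y a) / (s1 a * nbr_fecundity 0 y a) * ind (fst y) b')
      = (\<Sum>b'<N. pmat N w1 a b' * u y b' * ind (fst y) b')
        - (\<Sum>k<N. pmat N w1 a k * u y k) * (\<Sum>b'<N. pmat N w1 a b' * ind (fst y) b')"
    if a: "a < N" for a
  proof -
    have s: "s1 a > 0" using L1.strength_pos[OF a] .
    have "(\<Sum>b'<N. w1 a b' * (u y b' * s1 a - nbr_payoff y a) / (s1 a * nbr_fecundity 0 y a) * ind (fst y) b')
        = (\<Sum>b'<N. pmat N w1 a b' * u y b' * ind (fst y) b'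
          - (nbr_payoff y a / s1 a) * (pmat N w1 a b' * ind (fst y) b'))"
      using s by (intro sum.cong refl) (simp add: nbr_fecundity_eq pmat_def field_simps)
    also have "nbr_payoff y a / s1 a = (\<Sum>k<N. pmat N w1 a k * u y k)"
      by (simp add: nbr_payoff_def pmat_def sum_divide_distrib)
    finally show ?thesis by (simp add: sum_subtractf sum_distrib_left)
  qed
  have "drift 0 y = (1 / real N) * (\<Sum>a<N. statdist N w1 a * ((\<Sum>b'<N. pmat N w1 a b' * u y b' * ind (fst y) b')
      - (\<Sum>k<N. pmat N w1 a k * u y k) * (\<Sum>b'<N. pmat N w1 a b' * ind (fst y) b')))"
    unfolding drift_def
    by (intro arg_cong[where f = "\<lambda>z. (1 / real N) * z"] sum.cong refl) (simp only: row lessThan_iff)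
  then show ?thesis
    unfolding nbr_avg_prod_def nbr_prod_avg_def by (simp add: right_diff_distrib sum_subtractf)
qed

lemma payoff_decomp:
  "u y b' = (- c) * ind (fst y) b' + (b * (\<Sum>j<N. pmat N w1 b' j * ind (fst y) j)
    + ((r - 1) * ind (snd y) b' + 1))"
  by (simp add: payoff_def sum_distrib_left mult.assoc)

lemma drift_neutral:
  fixes y defines "x \<equiv> ind (fst y)" and "z \<equiv> ind (snd y)"
  shows "drift 0 y = (1 / real N) * (c * (pi_inner N w1 2 x x - pi_inner N w1 0 x x)
    + b * (pi_inner N w1 1 x x - pi_inner N w1 3 x x) + (r - 1) * (pi_inner N w1 0 x z - pi_inner N w1 2 x z))"
proof -
  let ?Px = "\<lambda>b'. \<Sum>j<N. pmat N w1 b' j * x j"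
  have A: "nbr_avg_prod N w1 (u y) x = (- c) * nbr_avg_prod N w1 x x
      + (b * nbr_avg_prod N w1 ?Px x + ((r - 1) * nbr_avg_prod N w1 z x + nbr_avg_prod N w1 (\<lambda>_. 1) x))"
    unfolding x_def z_def payoff_decomp nbr_avg_prod_linear ..
  have B: "nbr_prod_avg N w1 (u y) x = (- c) * nbr_prod_avg N w1 x x
      + (b * nbr_prod_avg N w1 ?Px x + ((r - 1) * nbr_prod_avg N w1 z x + nbr_prod_avg N w1 (\<lambda>_. 1) x))"
    unfolding x_def z_def payoff_decomp nbr_prod_avg_linear ..
  have "nbr_avg_prod N w1 (\<lambda>_. 1) x - nbr_prod_avg N w1 (\<lambda>_. 1) x = 0"
    using L1.nbr_avg_prod_1 by simp
  then have "drift 0 y = (1 / real N) * ((- c) * (nbr_avg_prod N w1 x x - nbr_prod_avg N w1 x x)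
      + b * (nbr_avg_prod N w1 ?Px x - nbr_prod_avg N w1 ?Px x)
      + (r - 1) * (nbr_avg_prod N w1 z x - nbr_prod_avg N w1 z x))"
    unfolding drift_neutral_nbr x_def[symmetric] A B by (simp add: algebra_simps)
  also have "\<dots> = (1 / real N) * ((- c) * (pi_inner N w1 0 x x - pi_inner N w1 2 x x)
      + b * (pi_inner N w1 1 x x - pi_inner N w1 3 x x)
      + (r - 1) * (pi_inner N w1 0 x z - pi_inner N w1 2 x z))"
    unfolding L1.nbr_avg_prod_pmat L1.nbr_prod_avg_pmat L1.nbr_avg_prod_eq L1.nbr_prod_avg_eq
      L1.pi_inner_swap[of 2 z x] ..
  finally show ?thesis by (simp add: algebra_simps)
qed

end

locale two_layer_from = two_layer +
  fixes \<xi> :: "nat set \<times> nat set"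
  assumes \<xi>_state: "\<xi> \<in> states N"
begin

abbreviation "X1 \<equiv> fst \<xi>"
abbreviation "X2 \<equiv> snd \<xi>"
abbreviation "m1 \<equiv> meanstate N w1 X1"
abbreviation "m2 \<equiv> meanstate N w2 X2"
abbreviation "p1 \<equiv> pmat N w1"
abbreviation "p2 \<equiv> pmat N w2"
abbreviation "\<pi>1 \<equiv> statdist N w1"

definition "coop_pair k l y = ind (fst y) k * ind (fst y) l"
definition "pair_excess t k l = mc_expect (T 0) S t (coop_pair k l) \<xi> - m1"
definition "beta_sum k l = (if k < N \<and> l < N then (\<Sum>t. pair_excess t k l) else 0)"

lemma coop_pair_approx: "k < N \<Longrightarrow> l < N \<Longrightarrow> \<bar>coop_pair k l y - coop_freq y\<bar> \<le> mixed fst N y"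
  using L1.meanstate_bounds[of "fst y"] L1.meanstate_monomorphic ind_01[of "fst y" k] ind_01[of "fst y" l]
  by (auto simp: coop_pair_def mixed_def ind_def abs_le_iff)

lemma abs_pair_excess_le: "k < N \<Longrightarrow> l < N \<Longrightarrow> \<bar>pair_excess t k l\<bar> \<le> decay ^ (t div N)"
proof -
  assume k: "k < N" and l: "l < N"
  have st: "stochastic (T 0) S" using stochastic_trans delta_max_pos by simp
  have "pair_excess t k l = mc_expect (T 0) S t (\<lambda>y. coop_pair k l y - coop_freq y) \<xi>"
    using mc_expect_neutral_coop_freq[OF \<xi>_state, of t] by (simp add: pair_excess_def mc_expect_diff)
  also have "\<bar>\<dots>\<bar> \<le> mc_expect (T 0) S t (mixed fst N) \<xi>"
    by (rule order_trans[OF mc_expect_abs_le[OF st \<xi>_state] mc_expect_mono[OF st \<xi>_state]])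
       (rule coop_pair_approx[OF k l])
  also have "\<dots> \<le> decay ^ (t div N)" using mixed_fst_decay[of 0 \<xi> t] delta_max_pos \<xi>_state by simp
  finally show ?thesis .
qed

lemma pair_excess_sums: "k < N \<Longrightarrow> l < N \<Longrightarrow> (\<lambda>t. pair_excess t k l) sums beta_sum k l"
  using summable_comparison_test[OF _ summable_decay, of "\<lambda>t. pair_excess t k l"] abs_pair_excess_le
  by (simp add: beta_sum_def summable_sums)

lemma pair_excess_Suc_diag:
  assumes k: "k < N"
  shows "pair_excess (Suc t) k k = (1 - 1 / real N) * pair_excess t k k
    + (1 / real N) * (\<Sum>b'<N. p1 k b' * pair_excess t b' b')"
proof -
  have step: "mc_expect (T 0) S 1 (coop_pair k k) y
      = (1 - 1 / real N) * coop_pair k k y + (1 / real N) * (\<Sum>b'<N. p1 k b' * coop_pair b' b' y)"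
    if "y \<in> S" for y
    using mc_expect_neutral_fst[OF that, of "\<lambda>Y. ind Y k"] L1.neutral_step_ind[OF k]
    by (simp add: coop_pair_def[abs_def] ind_01)
  have "mc_expect (T 0) S (Suc t) (coop_pair k k) \<xi>
      = mc_expect (T 0) S t (mc_expect (T 0) S 1 (coop_pair k k)) \<xi>"
    by (rule mc_expect_Suc_right[OF finite_states \<xi>_state])
  also have "\<dots> = mc_expect (T 0) S t (\<lambda>y. (1 - 1 / real N) * coop_pair k k y
      + (1 / real N) * (\<Sum>b'<N. p1 k b' * coop_pair b' b' y)) \<xi>"
    by (rule mc_expect_cong) (rule step)
  also have "\<dots> = (1 - 1 / real N) * mc_expect (T 0) S t (coop_pair k k) \<xi>
      + (1 / real N) * (\<Sum>b'<N. p1 k b' * mc_expect (T 0) S t (coop_pair b' b') \<xi>)"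
    by (simp only: mc_expect_add mc_expect_cmult mc_expect_sum)
  also have "\<dots> = (1 - 1 / real N) * (pair_excess t k k + m1)
      + (1 / real N) * (\<Sum>b'<N. p1 k b' * (pair_excess t b' b' + m1))"
    by (simp add: pair_excess_def)
  finally show ?thesis
    unfolding L1.pmat_sum_add_const[OF k] pair_excess_def[of "Suc t"] by (simp add: algebra_simps)
qed

lemma pair_excess_Suc_off:
  assumes k: "k < N" and l: "l < N" and kl: "k \<noteq> l"
  shows "pair_excess (Suc t) k l = (1 - 2 / real N) * pair_excess t k l
    + (1 / real N) * ((\<Sum>b'<N. p1 k b' * pair_excess t b' l) + (\<Sum>b'<N. p1 l b' * pair_excess t k b'))"
proof -
  have step: "mc_expect (T 0) S 1 (coop_pair k l) y = (1 - 2 / real N) * coop_pair k l y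
      + (1 / real N) * ((\<Sum>b'<N. p1 k b' * coop_pair b' l y) + (\<Sum>b'<N. p1 l b' * coop_pair k b' y))"
    if "y \<in> S" for y
    using mc_expect_neutral_fst[OF that, of "\<lambda>Y. ind Y k * ind Y l"] L1.neutral_step_ind_pair[OF k l kl]
    by (simp add: coop_pair_def[abs_def])
  have "mc_expect (T 0) S (Suc t) (coop_pair k l) \<xi>
      = mc_expect (T 0) S t (mc_expect (T 0) S 1 (coop_pair k l)) \<xi>"
    by (rule mc_expect_Suc_right[OF finite_states \<xi>_state])
  also have "\<dots> = mc_expect (T 0) S t (\<lambda>y. (1 - 2 / real N) * coop_pair k l y
      + (1 / real N) * ((\<Sum>b'<N. p1 k b' * coop_pair b' l y) + (\<Sum>b'<N. p1 l b' * coop_pair k b' y))) \<xi>"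
    by (rule mc_expect_cong) (rule step)
  also have "\<dots> = (1 - 2 / real N) * mc_expect (T 0) S t (coop_pair k l) \<xi>
      + (1 / real N) * ((\<Sum>b'<N. p1 k b' * mc_expect (T 0) S t (coop_pair b' l) \<xi>)
                        + (\<Sum>b'<N. p1 l b' * mc_expect (T 0) S t (coop_pair k b') \<xi>))"
    by (simp only: mc_expect_add mc_expect_cmult mc_expect_sum)
  also have "\<dots> = (1 - 2 / real N) * (pair_excess t k l + m1) + (1 / real N)
      * ((\<Sum>b'<N. p1 k b' * (pair_excess t b' l + m1)) + (\<Sum>b'<N. p1 l b' * (pair_excess t k b' + m1)))"
    by (simp add: pair_excess_def)
  finally show ?thesis
    unfolding L1.pmat_sum_add_const[OF k] L1.pmat_sum_add_const[OF l] pair_excess_def[of "Suc t"]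
    by (simp add: algebra_simps)
qed

lemma beta_sum_diag:
  assumes k: "k < N"
  shows "beta_sum k k = real N * (ind X1 k - m1) + (\<Sum>b'<N. p1 k b' * beta_sum b' b')"
proof -
  have "(\<lambda>t. pair_excess (Suc t) k k) sums (beta_sum k k - pair_excess 0 k k)"
    using pair_excess_sums[OF k k] sums_Suc_iff[of "\<lambda>t. pair_excess t k k"] by simp
  moreover have "(\<lambda>t. pair_excess (Suc t) k k)
      sums ((1 - 1 / real N) * beta_sum k k + (1 / real N) * (\<Sum>b'<N. p1 k b' * beta_sum b' b'))"
    unfolding pair_excess_Suc_diag[OF k] by (intro sums_add sums_mult sums_sum pair_excess_sums) (use k in auto)
  ultimately have "beta_sum k k - pair_excess 0 k k
      = (1 - 1 / real N) * beta_sum k k + (1 / real N) * (\<Sum>b'<N. p1 k b' * beta_sum b' b')"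
    by (rule sums_unique2)
  moreover have "pair_excess 0 k k = ind X1 k - m1"
    by (simp add: pair_excess_def mc_expect_0[OF finite_states \<xi>_state] coop_pair_def ind_01)
  ultimately show ?thesis using L1.N_pos by (simp add: field_simps)
qed

lemma beta_sum_off:
  assumes k: "k < N" and l: "l < N" and kl: "k \<noteq> l"
  shows "beta_sum k l = real N / 2 * (ind X1 k * ind X1 l - m1)
    + 1/2 * (\<Sum>b'<N. p1 k b' * beta_sum b' l) + 1/2 * (\<Sum>b'<N. p1 l b' * beta_sum k b')"
proof -
  have "(\<lambda>t. pair_excess (Suc t) k l) sums (beta_sum k l - pair_excess 0 k l)"
    using pair_excess_sums[OF k l] sums_Suc_iff[of "\<lambda>t. pair_excess t k l"] by simp
  moreover have "(\<lambda>t. pair_excess (Suc t) k l) sums ((1 - 2 / real N) * beta_sum k l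
      + (1 / real N) * ((\<Sum>b'<N. p1 k b' * beta_sum b' l) + (\<Sum>b'<N. p1 l b' * beta_sum k b')))"
    unfolding pair_excess_Suc_off[OF k l kl]
    by (intro sums_add sums_mult sums_sum pair_excess_sums) (use k l in auto)
  ultimately have "beta_sum k l - pair_excess 0 k l = (1 - 2 / real N) * beta_sum k l
      + (1 / real N) * ((\<Sum>b'<N. p1 k b' * beta_sum b' l) + (\<Sum>b'<N. p1 l b' * beta_sum k b'))"
    by (rule sums_unique2)
  moreover have "pair_excess 0 k l = ind X1 k * ind X1 l - m1"
    by (simp add: pair_excess_def mc_expect_0[OF finite_states \<xi>_state] coop_pair_def)
  ultimately have "2 / real N * beta_sum k l = (ind X1 k * ind X1 l - m1)
      + (1 / real N) * ((\<Sum>b'<N. p1 k b' * beta_sum b' l) + (\<Sum>b'<N. p1 l b' * beta_sum k b'))"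
    by (simp add: algebra_simps)
  then have "real N / 2 * (2 / real N * beta_sum k l) = real N / 2 * ((ind X1 k * ind X1 l - m1)
      + (1 / real N) * ((\<Sum>b'<N. p1 k b' * beta_sum b' l) + (\<Sum>b'<N. p1 l b' * beta_sum k b')))"
    by simp
  then show ?thesis using L1.N_pos by (simp add: algebra_simps)
qed

text \<open>\<open>\<Sum>k. \<pi>1 k * coop_pair k k\<close> is \<open>coop_freq\<close>, a neutral martingale.\<close>

lemma beta_sum_normalised: "(\<Sum>k<N. \<pi>1 k * beta_sum k k) = 0"
proof -
  have "(\<Sum>k<N. \<pi>1 k * pair_excess t k k) = 0" for t
  proof -
    have "(\<Sum>k<N. \<pi>1 k * mc_expect (T 0) S t (coop_pair k k) \<xi>)
        = mc_expect (T 0) S t (\<lambda>y. \<Sum>k<N. \<pi>1 k * coop_pair k k y) \<xi>"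
      by (simp only: mc_expect_sum mc_expect_cmult)
    also have "(\<lambda>y. \<Sum>k<N. \<pi>1 k * coop_pair k k y) = coop_freq"
      by (simp add: coop_pair_def ind_01 meanstate_def)
    finally have "(\<Sum>k<N. \<pi>1 k * mc_expect (T 0) S t (coop_pair k k) \<xi>) = m1"
      using mc_expect_neutral_coop_freq[OF \<xi>_state, of t] by simp
    then show ?thesis
      by (simp add: pair_excess_def right_diff_distrib sum_subtractf L1.statdist_sum_mult)
  qed
  moreover have "(\<lambda>t. \<Sum>k<N. \<pi>1 k * pair_excess t k k) sums (\<Sum>k<N. \<pi>1 k * beta_sum k k)"
    by (intro sums_sum sums_mult pair_excess_sums) auto
  ultimately show ?thesis using sums_unique2[OF _ sums_zero] by simp
qed

lemma is_beta_beta_sum: "is_beta N w1 X1 beta_sum"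
  unfolding is_beta_def
  using beta_sum_off beta_sum_diag beta_sum_normalised by (auto simp: beta_sum_def[of i j for i j])

definition "cross_pair k l y = ind (fst y) k * ind (snd y) l"
definition "cross_excess t k l = mc_expect (T 0) S t (cross_pair k l) \<xi> - m1 * m2"
definition "cross_sum k l = (\<Sum>t. cross_excess t k l)"
definition "cross_diag_mean = (\<Sum>i<N. \<pi>1 i * cross_sum i i)"
definition "gamma_sum k l = (if k < N \<and> l < N then cross_sum k l - cross_diag_mean else 0)"

lemma cross_pair_approx:
  assumes k: "k < N" and l: "l < N"
  shows "\<bar>cross_pair k l y - coop_freq y * meanstate N w2 (snd y)\<bar> \<le> mixed fst N y + mixed snd N y"
proof (cases "(fst y = {} \<or> fst y = {..<N}) \<and> (snd y = {} \<or> snd y = {..<N})")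
  case True
  have "ind (fst y) k = coop_freq y"
    using True k by (cases "fst y = {}") (simp_all add: ind_def L1.meanstate_monomorphic)
  moreover have "ind (snd y) l = meanstate N w2 (snd y)"
    using True l by (cases "snd y = {}") (simp_all add: ind_def L2.meanstate_monomorphic)
  ultimately show ?thesis by (simp add: cross_pair_def mixed_def)
next
  case False
  then have "1 \<le> mixed fst N y + mixed snd N y" by (auto simp: mixed_def)
  moreover have "0 \<le> cross_pair k l y" "cross_pair k l y \<le> 1"
    unfolding cross_pair_def using ind_01 by (auto intro: mult_le_one)
  moreover have "0 \<le> coop_freq y * meanstate N w2 (snd y)" "coop_freq y * meanstate N w2 (snd y) \<le> 1"
    using L1.meanstate_bounds[of "fst y"] L2.meanstate_bounds[of "snd y"] by (auto intro: mult_le_one)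
  ultimately show ?thesis by linarith
qed

lemma abs_cross_excess_le: "k < N \<Longrightarrow> l < N \<Longrightarrow> \<bar>cross_excess t k l\<bar> \<le> 2 * decay ^ (t div N)"
proof -
  assume k: "k < N" and l: "l < N"
  let ?dev = "\<lambda>y. cross_pair k l y - coop_freq y * meanstate N w2 (snd y)"
  have d0: "0 \<in> {0..delta_max}" using delta_max_pos by simp
  note st = stochastic_trans[OF d0]
  have "cross_excess t k l = mc_expect (T 0) S t ?dev \<xi>"
    using mc_expect_neutral_freq_prod[OF \<xi>_state, of t] by (simp add: cross_excess_def mc_expect_diff)
  moreover have "\<bar>mc_expect (T 0) S t ?dev \<xi>\<bar> \<le> mc_expect (T 0) S t (\<lambda>y. \<bar>?dev y\<bar>) \<xi>"
    by (rule mc_expect_abs_le[OF st \<xi>_state])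
  moreover have "\<dots> \<le> mc_expect (T 0) S t (\<lambda>y. mixed fst N y + mixed snd N y) \<xi>"
    by (rule mc_expect_mono[OF st \<xi>_state]) (rule cross_pair_approx[OF k l])
  moreover have "\<dots> \<le> 2 * decay ^ (t div N)"
    using mixed_fst_decay[OF d0 \<xi>_state, of t] mixed_snd_decay[OF d0 \<xi>_state, of t]
    by (simp only: mc_expect_add)
  ultimately show ?thesis by linarith
qed

lemma cross_excess_sums: "k < N \<Longrightarrow> l < N \<Longrightarrow> (\<lambda>t. cross_excess t k l) sums cross_sum k l"
  using summable_comparison_test[OF _ summable_mult[OF summable_decay, of 2], of "\<lambda>t. cross_excess t k l"]
    abs_cross_excess_le
  by (simp add: cross_sum_def summable_sums)

text \<open>Probabilities that a neutral step replaces neither, exactly one given, or both of two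
  fixed individuals, one in each layer.\<close>

definition "p_neither = (1 - 1 / real N) * (1 - 1 / real N)"
definition "p_one = (1 - 1 / real N) * (1 / real N)"
definition "p_both = (1 / real N) * (1 / real N)"

lemma mc_expect_neutral_cross_pair:
  assumes k: "k < N" and l: "l < N" and y: "y \<in> S"
  shows "mc_expect (T 0) S 1 (cross_pair k l) y = p_neither * cross_pair k l y
    + p_one * ((\<Sum>b'<N. p1 k b' * cross_pair b' l y) + (\<Sum>b'<N. p2 l b' * cross_pair k b' y))
    + p_both * (\<Sum>b'<N. \<Sum>b2<N. p1 k b' * p2 l b2 * cross_pair b' b2 y)"
proof -
  let ?x = "ind (fst y)" and ?z = "ind (snd y)"
  have "mc_expect (T 0) S 1 (cross_pair k l) y
      = ((1 - 1 / real N) * ?x k + (1 / real N) * (\<Sum>b'<N. p1 k b' * ?x b'))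
        * ((1 - 1 / real N) * ?z l + (1 / real N) * (\<Sum>b'<N. p2 l b' * ?z b'))"
    using mc_expect_neutral_prod[OF y, of "\<lambda>Y. ind Y k" "\<lambda>Y. ind Y l"]
    by (simp add: cross_pair_def[abs_def] L1.neutral_step_ind[OF k] L2.neutral_step_ind[OF l])
  also have "\<dots> = p_neither * (?x k * ?z l)
      + p_one * ((\<Sum>b'<N. p1 k b' * ?x b') * ?z l + ?x k * (\<Sum>b'<N. p2 l b' * ?z b'))
      + p_both * ((\<Sum>b'<N. p1 k b' * ?x b') * (\<Sum>b2<N. p2 l b2 * ?z b2))"
    unfolding p_neither_def p_one_def p_both_def by (simp add: algebra_simps)
  also have "(\<Sum>b'<N. p1 k b' * ?x b') * ?z l = (\<Sum>b'<N. p1 k b' * cross_pair b' l y)"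
    by (simp add: cross_pair_def sum_distrib_right mult.assoc)
  also have "?x k * (\<Sum>b'<N. p2 l b' * ?z b') = (\<Sum>b'<N. p2 l b' * cross_pair k b' y)"
    by (simp add: cross_pair_def sum_distrib_left mult_ac)
  also have "(\<Sum>b'<N. p1 k b' * ?x b') * (\<Sum>b2<N. p2 l b2 * ?z b2)
      = (\<Sum>b'<N. \<Sum>b2<N. p1 k b' * p2 l b2 * cross_pair b' b2 y)"
    by (simp add: cross_pair_def sum_distrib_left sum_distrib_right mult_ac) (rule sum.swap)
  finally show ?thesis by (simp only: cross_pair_def[abs_def])
qed

lemma cross_excess_Suc:
  assumes k: "k < N" and l: "l < N"
  shows "cross_excess (Suc t) k l = p_neither * cross_excess t k l
    + p_one * ((\<Sum>b'<N. p1 k b' * cross_excess t b' l) + (\<Sum>b'<N. p2 l b' * cross_excess t k b'))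
    + p_both * (\<Sum>b'<N. \<Sum>b2<N. p1 k b' * p2 l b2 * cross_excess t b' b2)"
proof -
  let ?E = "\<lambda>k l. mc_expect (T 0) S t (cross_pair k l) \<xi>" and ?m = "m1 * m2"
  have pair_sum: "(\<Sum>b'<N. \<Sum>b2<N. p1 k b' * p2 l b2 * (A b' b2 + ?m))
      = (\<Sum>b'<N. \<Sum>b2<N. p1 k b' * p2 l b2 * A b' b2) + ?m" for A
  proof -
    have "(\<Sum>b'<N. \<Sum>b2<N. p1 k b' * p2 l b2 * (A b' b2 + ?m))
        = (\<Sum>b'<N. p1 k b' * ((\<Sum>b2<N. p2 l b2 * A b' b2) + ?m))"
      by (simp add: L2.pmat_sum_add_const[OF l] mult.assoc flip: sum_distrib_left)
    also have "\<dots> = (\<Sum>b'<N. p1 k b' * (\<Sum>b2<N. p2 l b2 * A b' b2)) + ?m"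
      by (rule L1.pmat_sum_add_const[OF k])
    finally show ?thesis by (simp add: sum_distrib_left mult.assoc)
  qed
  have "mc_expect (T 0) S (Suc t) (cross_pair k l) \<xi>
      = mc_expect (T 0) S t (mc_expect (T 0) S 1 (cross_pair k l)) \<xi>"
    by (rule mc_expect_Suc_right[OF finite_states \<xi>_state])
  also have "\<dots> = mc_expect (T 0) S t (\<lambda>y. p_neither * cross_pair k l y
      + p_one * ((\<Sum>b'<N. p1 k b' * cross_pair b' l y) + (\<Sum>b'<N. p2 l b' * cross_pair k b' y))
      + p_both * (\<Sum>b'<N. \<Sum>b2<N. p1 k b' * p2 l b2 * cross_pair b' b2 y)) \<xi>"
    by (rule mc_expect_cong) (rule mc_expect_neutral_cross_pair[OF k l])
  also have "\<dots> = p_neither * ?E k l + p_one * ((\<Sum>b'<N. p1 k b' * ?E b' l) + (\<Sum>b'<N. p2 l b' * ?E k b'))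
      + p_both * (\<Sum>b'<N. \<Sum>b2<N. p1 k b' * p2 l b2 * ?E b' b2)"
    by (simp only: mc_expect_add mc_expect_cmult mc_expect_sum)
  also have "\<dots> = p_neither * (cross_excess t k l + ?m)
      + p_one * ((\<Sum>b'<N. p1 k b' * (cross_excess t b' l + ?m)) + (\<Sum>b'<N. p2 l b' * (cross_excess t k b' + ?m)))
      + p_both * (\<Sum>b'<N. \<Sum>b2<N. p1 k b' * p2 l b2 * (cross_excess t b' b2 + ?m))"
    by (simp add: cross_excess_def)
  also have "\<dots> = p_neither * (cross_excess t k l + ?m)
      + p_one * (((\<Sum>b'<N. p1 k b' * cross_excess t b' l) + ?m) + ((\<Sum>b'<N. p2 l b' * cross_excess t k b') + ?m))
      + p_both * ((\<Sum>b'<N. \<Sum>b2<N. p1 k b' * p2 l b2 * cross_excess t b' b2) + ?m)"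
    by (simp only: L1.pmat_sum_add_const[OF k] L2.pmat_sum_add_const[OF l] pair_sum)
  finally have step: "mc_expect (T 0) S (Suc t) (cross_pair k l) \<xi> = \<dots>" .
  have "(p_neither + 2 * p_one + p_both) * ?m = ?m"
    unfolding p_neither_def p_one_def p_both_def using L1.N_pos by (simp add: field_simps)
  then show ?thesis unfolding cross_excess_def[of "Suc t"] step by (simp add: algebra_simps)
qed

lemma cross_sum_eq:
  assumes k: "k < N" and l: "l < N"
  shows "cross_sum k l = (real N)^2 / (2 * real N - 1) * (ind X1 k * ind X2 l - m1 * m2)
    + 1 / (2 * real N - 1) * (\<Sum>b'<N. \<Sum>b2<N. p1 k b' * p2 l b2 * cross_sum b' b2)
    + (real N - 1) / (2 * real N - 1) * ((\<Sum>b'<N. p1 k b' * cross_sum b' l) + (\<Sum>b'<N. p2 l b' * cross_sum k b'))"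
proof -
  let ?A = "(\<Sum>b'<N. p1 k b' * cross_sum b' l) + (\<Sum>b'<N. p2 l b' * cross_sum k b')"
  let ?C = "\<Sum>b'<N. \<Sum>b2<N. p1 k b' * p2 l b2 * cross_sum b' b2"
  let ?K = "(real N)^2 / (2 * real N - 1)"
  have "(\<lambda>t. cross_excess (Suc t) k l) sums (cross_sum k l - cross_excess 0 k l)"
    using cross_excess_sums[OF k l] sums_Suc_iff[of "\<lambda>t. cross_excess t k l"] by simp
  moreover have "(\<lambda>t. cross_excess (Suc t) k l) sums (p_neither * cross_sum k l + p_one * ?A + p_both * ?C)"
    unfolding cross_excess_Suc[OF k l] by (intro sums_add sums_mult sums_sum cross_excess_sums) (use k l in auto)
  ultimately have "cross_sum k l - cross_excess 0 k l = p_neither * cross_sum k l + p_one * ?A + p_both * ?C"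
    by (rule sums_unique2)
  moreover have "cross_excess 0 k l = ind X1 k * ind X2 l - m1 * m2"
    by (simp add: cross_excess_def mc_expect_0[OF finite_states \<xi>_state] cross_pair_def)
  ultimately have e: "(1 - p_neither) * cross_sum k l = (ind X1 k * ind X2 l - m1 * m2) + p_one * ?A + p_both * ?C"
    by (simp add: algebra_simps)
  have N1: "2 * real N - 1 \<noteq> 0" using N2 by simp
  have K: "?K * (1 - p_neither) = 1" "?K * p_one = (real N - 1) / (2 * real N - 1)"
    "?K * p_both = 1 / (2 * real N - 1)"
    unfolding p_neither_def p_one_def p_both_def using L1.N_pos N1
    by (simp_all add: field_simps power2_eq_square)
  have "cross_sum k l = (?K * (1 - p_neither)) * cross_sum k l" by (simp only: K(1) mult_1)
  also have "\<dots> = ?K * ((ind X1 k * ind X2 l - m1 * m2) + p_one * ?A + p_both * ?C)"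
    by (simp only: mult.assoc e)
  also have "\<dots> = ?K * (ind X1 k * ind X2 l - m1 * m2) + (?K * p_both) * ?C + (?K * p_one) * ?A"
    by (simp add: algebra_simps)
  finally show ?thesis unfolding K(2,3) .
qed

lemma is_gamma_gamma_sum: "is_gamma N w1 w2 X1 X2 gamma_sum"
proof -
  have eq: "gamma_sum i j = (real N)^2 / (2 * real N - 1) * (ind X1 i * ind X2 j - m1 * m2)
     + 1 / (2 * real N - 1) * (\<Sum>k1<N. \<Sum>k2<N. p1 i k1 * p2 j k2 * gamma_sum k1 k2)
     + (real N - 1) / (2 * real N - 1) * ((\<Sum>k<N. p1 i k * gamma_sum k j) + (\<Sum>k<N. p2 j k * gamma_sum i k))"
    if i: "i < N" and j: "j < N" for i j
  proof -
    let ?c = "cross_diag_mean"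
    have "(\<Sum>k1<N. \<Sum>k2<N. p1 i k1 * p2 j k2 * gamma_sum k1 k2)
        = (\<Sum>k1<N. p1 i k1 * (\<Sum>k2<N. p2 j k2 * (cross_sum k1 k2 - ?c)))"
      by (simp add: gamma_sum_def mult.assoc sum_distrib_left)
    also have "\<dots> = (\<Sum>k1<N. p1 i k1 * ((\<Sum>k2<N. p2 j k2 * cross_sum k1 k2) - ?c))"
      by (simp add: L2.pmat_sum_diff_const[OF j])
    also have "\<dots> = (\<Sum>k1<N. \<Sum>k2<N. p1 i k1 * p2 j k2 * cross_sum k1 k2) - ?c"
      by (simp add: L1.pmat_sum_diff_const[OF i] sum_distrib_left mult.assoc)
    finally have g1: "(\<Sum>k1<N. \<Sum>k2<N. p1 i k1 * p2 j k2 * gamma_sum k1 k2)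
        = (\<Sum>k1<N. \<Sum>k2<N. p1 i k1 * p2 j k2 * cross_sum k1 k2) - ?c" .
    have g2: "(\<Sum>k<N. p1 i k * gamma_sum k j) = (\<Sum>k<N. p1 i k * cross_sum k j) - ?c"
      using L1.pmat_sum_diff_const[OF i, of "\<lambda>a. cross_sum a j" ?c] j by (simp add: gamma_sum_def)
    have g3: "(\<Sum>k<N. p2 j k * gamma_sum i k) = (\<Sum>k<N. p2 j k * cross_sum i k) - ?c"
      using L2.pmat_sum_diff_const[OF j, of "\<lambda>a. cross_sum i a" ?c] i by (simp add: gamma_sum_def)
    have shift: "G - c = K + D * (X - c) + E * ((Y - c) + (Z - c))"
      if "G = K + D * X + E * (Y + Z)" "D = 1 - 2 * E" for G K D X E Y Z c :: real
      unfolding that by (simp add: algebra_simps)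
    have coeff: "1 / (2 * real N - 1) = 1 - 2 * ((real N - 1) / (2 * real N - 1))"
      using N2 by (simp add: field_simps)
    have "gamma_sum i j = cross_sum i j - ?c" using i j by (simp add: gamma_sum_def)
    also have "\<dots> = (real N)^2 / (2 * real N - 1) * (ind X1 i * ind X2 j - m1 * m2)
      + 1 / (2 * real N - 1) * ((\<Sum>k1<N. \<Sum>k2<N. p1 i k1 * p2 j k2 * cross_sum k1 k2) - ?c)
      + (real N - 1) / (2 * real N - 1)
        * (((\<Sum>k<N. p1 i k * cross_sum k j) - ?c) + ((\<Sum>k<N. p2 j k * cross_sum i k) - ?c))"
      by (rule shift[OF cross_sum_eq[OF i j] coeff])
    finally show ?thesis unfolding g1 g2 g3 .
  qed
  have norm: "(\<Sum>i<N. \<pi>1 i * gamma_sum i i) = 0"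
    by (simp add: gamma_sum_def right_diff_distrib sum_subtractf L1.statdist_sum_mult cross_diag_mean_def)
  show ?thesis unfolding is_gamma_def
  proof (intro conjI)
    show "\<forall>i j. \<not> (i < N \<and> j < N) \<longrightarrow> gamma_sum i j = 0" by (simp add: gamma_sum_def)
  qed (use eq norm in blast)+
qed

lemma mc_expect_pi_inner_coop:
  "mc_expect (T 0) S t (\<lambda>y. pi_inner N w1 n (ind (fst y)) (ind (fst y))) \<xi> = pi_form N w1 n (pair_excess t) + m1"
proof -
  have "mc_expect (T 0) S t (\<lambda>y. pi_inner N w1 n (ind (fst y)) (ind (fst y))) \<xi>
      = pi_form N w1 n (\<lambda>k l. mc_expect (T 0) S t (coop_pair k l) \<xi>)"
    unfolding pi_inner_def pi_form_def coop_pair_def by (simp only: mc_expect_sum mc_expect_cmult)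
  also have "\<dots> = pi_form N w1 n (\<lambda>k l. pair_excess t k l + m1)"
    by (simp add: pair_excess_def)
  finally show ?thesis by (simp add: L1.pi_form_add_const)
qed

lemma mc_expect_pi_inner_cross:
  "mc_expect (T 0) S t (\<lambda>y. pi_inner N w1 n (ind (fst y)) (ind (snd y))) \<xi>
    = pi_form N w1 n (cross_excess t) + m1 * m2"
proof -
  have "mc_expect (T 0) S t (\<lambda>y. pi_inner N w1 n (ind (fst y)) (ind (snd y))) \<xi>
      = pi_form N w1 n (\<lambda>k l. mc_expect (T 0) S t (cross_pair k l) \<xi>)"
    unfolding pi_inner_def pi_form_def cross_pair_def by (simp only: mc_expect_sum mc_expect_cmult)
  also have "\<dots> = pi_form N w1 n (\<lambda>k l. cross_excess t k l + m1 * m2)"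
    by (simp add: cross_excess_def)
  finally show ?thesis by (simp add: L1.pi_form_add_const)
qed

lemma pi_form_sums:
  assumes "\<And>k l. k < N \<Longrightarrow> l < N \<Longrightarrow> (\<lambda>t. f t k l) sums F k l"
  shows "(\<lambda>t. pi_form N w1 n (f t)) sums pi_form N w1 n F"
  unfolding pi_form_def using assms by (intro sums_sum sums_mult) auto

lemma drift_total_neutral:
  "drift_total 0 \<xi> = (1 / real N) * (c * (pi_form N w1 2 beta_sum - pi_form N w1 0 beta_sum)
    + b * (pi_form N w1 1 beta_sum - pi_form N w1 3 beta_sum)
    + (r - 1) * (pi_form N w1 0 cross_sum - pi_form N w1 2 cross_sum))"
proof -
  have "(\<lambda>t. mc_expect (T 0) S t (drift 0) \<xi>) sums drift_total 0 \<xi>"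
    unfolding drift_total_def using delta_max_pos \<xi>_state by (intro summable_sums summable_drift) auto
  moreover have "mc_expect (T 0) S t (drift 0) \<xi> = (1 / real N)
      * (c * (pi_form N w1 2 (pair_excess t) - pi_form N w1 0 (pair_excess t))
      + b * (pi_form N w1 1 (pair_excess t) - pi_form N w1 3 (pair_excess t))
      + (r - 1) * (pi_form N w1 0 (cross_excess t) - pi_form N w1 2 (cross_excess t)))" for t
    unfolding drift_neutral[abs_def]
    by (simp only: mc_expect_cmult mc_expect_add mc_expect_diff mc_expect_pi_inner_coop
        mc_expect_pi_inner_cross) simp
  then have "(\<lambda>t. mc_expect (T 0) S t (drift 0) \<xi>) sums ((1 / real N)
      * (c * (pi_form N w1 2 beta_sum - pi_form N w1 0 beta_sum)
      + b * (pi_form N w1 1 beta_sum - pi_form N w1 3 beta_sum)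
      + (r - 1) * (pi_form N w1 0 cross_sum - pi_form N w1 2 cross_sum)))"
    by (simp only:) (intro sums_mult sums_add sums_diff pi_form_sums pair_excess_sums cross_excess_sums)
  ultimately show ?thesis by (rule sums_unique2)
qed

lemma pi_form_beta_sum: "pi_form N w1 n beta_sum = theta N w1 X1 n"
  unfolding pi_form_def theta_def L1.betaM_eq[OF is_beta_beta_sum] ..

lemma pi_form_cross_sum_diff: "pi_form N w1 0 cross_sum - pi_form N w1 2 cross_sum = - phi N w1 w2 X1 X2 2 0"
proof -
  have cross: "pi_form N w1 n cross_sum = pi_form N w1 n gamma_sum + cross_diag_mean" for n
    by (simp add: gamma_sum_def pi_form_def flip: L1.pi_form_add_const[unfolded pi_form_def])
  have "pi_form N w1 0 gamma_sum = 0"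
    using is_gamma_gamma_sum unfolding is_gamma_def L1.pi_form_0 by blast
  moreover have "phi N w1 w2 X1 X2 2 0 = pi_form N w1 2 gamma_sum"
  proof -
    have "(\<Sum>k<N. matpow N p1 2 i k * matpow N p2 0 k j) = matpow N p1 2 i j" if "j < N" for i j
    proof -
      have "(\<Sum>k<N. matpow N p1 2 i k * matpow N p2 0 k j) = (\<Sum>k<N. if k = j then matpow N p1 2 i k else 0)"
        by (rule sum.cong) auto
      then show ?thesis using that by simp
    qed
    then show ?thesis
      unfolding phi_def pi_form_def
        gammaM_eq[OF L1.graph_layer_axioms L2.graph_layer_axioms N2 is_gamma_gamma_sum]
      by (intro sum.cong refl) auto
  qed
  ultimately show ?thesis by (simp add: cross)
qed

lemma drift_total_neutral_eq:
  "drift_total 0 \<xi> = (1 / real N) * (c * theta N w1 X1 2 + b * (theta N w1 X1 1 - theta N w1 X1 3)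
    - (r - 1) * phi N w1 w2 X1 X2 2 0)"
proof -
  have "pi_form N w1 0 beta_sum = 0"
    using beta_sum_normalised by (simp add: L1.pi_form_0)
  then show ?thesis
    unfolding drift_total_neutral pi_form_cross_sum_diff pi_form_beta_sum[symmetric]
    by (simp add: algebra_simps)
qed

end

theorem mainTheorem1:
  fixes N :: nat and w1 w2 :: "nat \<Rightarrow> nat \<Rightarrow> real" and b c r :: real
    and \<xi> :: "nat set \<times> nat set"
  assumes "N \<ge> 2"
    and "valid_layer N w1" and "valid_layer N w2"
    and "r \<ge> 0"
    and "\<xi> \<in> states N"
    and "\<not> (fst \<xi> \<in> {{}, {..<N}} \<and> snd \<xi> \<in> {{}, {..<N}})"
  shows "\<exists>D. ((\<lambda>\<delta>. rho1 N w1 w2 b c r \<delta> \<xi>) has_real_derivative D) (at 0 within {0..})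
           \<and> (D > 0 \<longleftrightarrow>
              c * theta N w1 (fst \<xi>) 2
              + b * (theta N w1 (fst \<xi>) 1 - theta N w1 (fst \<xi>) 3)
              - (r - 1) * phi N w1 w2 (fst \<xi>) (snd \<xi>) 2 0 > 0)"
proof -
  interpret two_layer_from N w1 w2 b c r \<xi>
    using assms(1-3,5) by unfold_locales
  let ?F = "c * theta N w1 (fst \<xi>) 2 + b * (theta N w1 (fst \<xi>) 1 - theta N w1 (fst \<xi>) 3)
    - (r - 1) * phi N w1 w2 (fst \<xi>) (snd \<xi>) 2 0"
  have "((\<lambda>\<delta>. rho1 N w1 w2 b c r \<delta> \<xi>) has_real_derivative (1 / real N) * ?F) (at 0 within {0..})"
    using rho1_has_derivative[OF \<xi>_state] unfolding drift_total_neutral_eq .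
  moreover have "(1 / real N) * F > 0 \<longleftrightarrow> F > 0" for F :: real
    using assms(1) by (simp add: zero_less_divide_iff)
  ultimately show ?thesis by blast
qed

end
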